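(* Let $(\mathcal C,\otimes,\mathbb 1,c)$ be a symmetric monoidal category. For an integral Hopf algebra $(H,m,u,\underline\Delta,\underline\varepsilon,S,S^{-1},\Lambda,\lambda)$ in $\mathcal C$, the tuple $(H,m,u,\Delta,\varepsilon)$ with $\Delta:=(m\otimes S)(\mathrm{id}_H\otimes\underline\Delta\Lambda)$ and $\varepsilon:=\lambda$ is a Frobenius algebra in $\mathcal C$; and every morphism of integral Hopf algebras $f:H\to K$ is a morphism of the corresponding Frobenius algebras. Hence this assignment, acting as the identity on morphisms, is a well-defined functor $\Psi:\mathsf{IntHopfAlg}(\mathcal C)\to\mathsf{FrobAlg}(\mathcal C)$.
   Context: Monoidal categories are taken strict. A Hopf algebra in a symmetric monoidal category $\mathcal C$ is $(H,m,u,\underline\Delta,\underline\varepsilon,S)$ where $(H,m,u)$ is an associative unital algebra, $(H,\underline\Delta,\underline\varepsilon)$ a coassociative counital coalgebra, $\underline\Delta$ and $\underline\varepsilon$ are algebra morphisms (with $H\otimes H$ having the algebra structure using the symmetry $c$), and $S:H\to H$ satisfies $m(S\otimes\mathrm{id})\underline\Delta=u\underline\varepsilon=m(\mathrm{id}\otimes S)\underline\Delta$. A left integral is $\Lambda:\mathbb 1\to H$ with $m(\mathrm{id}_H\otimes\Lambda)=\Lambda\underline\varepsilon$; a right cointegral is $\lambda:H\to\mathbb 1$ with $(\lambda\otimes\mathrm{id}_H)\underline\Delta=u\lambda$; they are normalized if $\lambda\Lambda=\mathrm{id}_{\mathbb 1}$. An integral Hopf algebra is a Hopf algebra with invertible antipode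 $S$ (inverse $S^{-1}$) equipped with a normalized pair $(\Lambda,\lambda)$. A morphism of integral Hopf algebras is an algebra and coalgebra morphism $f$ with $f\Lambda_H=\Lambda_K$ and $\lambda_Kf=\lambda_H$; these form $\mathsf{IntHopfAlg}(\mathcal C)$. A Frobenius algebra is $(A,m,u,\Delta,\varepsilon)$, an associative unital algebra and coassociative counital coalgebra with $(m\otimes\mathrm{id})(\mathrm{id}\otimes\Delta)=\Delta m=(\mathrm{id}\otimes m)(\Delta\otimes\mathrm{id})$; $\mathsf{FrobAlg}(\mathcal C)$ has morphisms preserving $m,u,\Delta,\varepsilon$. *)

theory Defs
  imports Main
begin

record ('o,'m) smc =
  Ob   :: "'o set"
  Ar   :: "'m set"
  Dom  :: "'m \<Rightarrow> 'o"
  Cod  :: "'m \<Rightarrow> 'o"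
  Idm  :: "'o \<Rightarrow> 'm"
  Cmp  :: "'m \<Rightarrow> 'm \<Rightarrow> 'm"   (* Cmp C g f = g \<circ> f *)
  TnO  :: "'o \<Rightarrow> 'o \<Rightarrow> 'o"
  TnM  :: "'m \<Rightarrow> 'm \<Rightarrow> 'm"
  Unt   :: "'o"
  Sy   :: "'o \<Rightarrow> 'o \<Rightarrow> 'm"

definition hom :: "('o,'m) smc \<Rightarrow> 'm \<Rightarrow> 'o \<Rightarrow> 'o \<Rightarrow> bool" where
  "hom C f A B \<longleftrightarrow> f \<in> Ar C \<and> Dom C f = A \<and> Cod C f = B"

definition strict_symmetric_monoidal_cat :: "('o,'m) smc \<Rightarrow> bool" where
  "strict_symmetric_monoidal_cat C \<longleftrightarrow>
    
    (\<forall>f\<in>Ar C. Dom C f \<in> Ob C \<and> Cod C f \<in> Ob C) \<and>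
    (\<forall>A\<in>Ob C. hom C (Idm C A) A A) \<and>
    (\<forall>f g A B D. hom C f A B \<longrightarrow> hom C g B D \<longrightarrow> hom C (Cmp C g f) A D) \<and>
    (\<forall>f g h A B D E. hom C f A B \<longrightarrow> hom C g B D \<longrightarrow> hom C h D E \<longrightarrow>
        Cmp C h (Cmp C g f) = Cmp C (Cmp C h g) f) \<and>
    (\<forall>f A B. hom C f A B \<longrightarrow> Cmp C f (Idm C A) = f \<and> Cmp C (Idm C B) f = f) \<and>
    
    Unt C \<in> Ob C \<and>
    (\<forall>A\<in>Ob C. \<forall>B\<in>Ob C. TnO C A B \<in> Ob C) \<and>
    (\<forall>f g A B A' B'. hom C f A B \<longrightarrow> hom C g A' B' \<longrightarrow>
        hom C (TnM C f g) (TnO C A A') (TnO C B B')) \<and>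
    (\<forall>A\<in>Ob C. \<forall>B\<in>Ob C. TnM C (Idm C A) (Idm C B) = Idm C (TnO C A B)) \<and>
    (\<forall>f g f' g' A B D A' B' D'. hom C f A B \<longrightarrow> hom C g B D \<longrightarrow>
        hom C f' A' B' \<longrightarrow> hom C g' B' D' \<longrightarrow>
        TnM C (Cmp C g f) (Cmp C g' f') = Cmp C (TnM C g g') (TnM C f f')) \<and>
    
    (\<forall>A\<in>Ob C. \<forall>B\<in>Ob C. \<forall>D\<in>Ob C. TnO C (TnO C A B) D = TnO C A (TnO C B D)) \<and>
    (\<forall>A\<in>Ob C. TnO C (Unt C) A = A \<and> TnO C A (Unt C) = A) \<and>
    (\<forall>f\<in>Ar C. \<forall>g\<in>Ar C. \<forall>h\<in>Ar C. TnM C (TnM C f g) h = TnM C f (TnM C g h)) \<and>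
    (\<forall>f\<in>Ar C. TnM C (Idm C (Unt C)) f = f \<and> TnM C f (Idm C (Unt C)) = f) \<and>
    
    (\<forall>A\<in>Ob C. \<forall>B\<in>Ob C. hom C (Sy C A B) (TnO C A B) (TnO C B A)) \<and>
    (\<forall>f g A A' B B'. hom C f A A' \<longrightarrow> hom C g B B' \<longrightarrow>
        Cmp C (Sy C A' B') (TnM C f g) = Cmp C (TnM C g f) (Sy C A B)) \<and>
    (\<forall>A\<in>Ob C. \<forall>B\<in>Ob C. Cmp C (Sy C B A) (Sy C A B) = Idm C (TnO C A B)) \<and>
    (\<forall>A\<in>Ob C. \<forall>B\<in>Ob C. \<forall>D\<in>Ob C.
        Sy C A (TnO C B D) = Cmp C (TnM C (Idm C B) (Sy C A D)) (TnM C (Sy C A B) (Idm C D))) \<and>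
    (\<forall>A\<in>Ob C. \<forall>B\<in>Ob C. \<forall>D\<in>Ob C.
        Sy C (TnO C A B) D = Cmp C (TnM C (Sy C A D) (Idm C B)) (TnM C (Idm C A) (Sy C B D)))"

definition is_algebra :: "('o,'m) smc \<Rightarrow> 'o \<Rightarrow> 'm \<Rightarrow> 'm \<Rightarrow> bool" where
  "is_algebra C A m u \<longleftrightarrow> A \<in> Ob C \<and>
     hom C m (TnO C A A) A \<and> hom C u (Unt C) A \<and>
     Cmp C m (TnM C m (Idm C A)) = Cmp C m (TnM C (Idm C A) m) \<and>
     Cmp C m (TnM C u (Idm C A)) = Idm C A \<and>
     Cmp C m (TnM C (Idm C A) u) = Idm C A"

definition is_coalgebra :: "('o,'m) smc \<Rightarrow> 'o \<Rightarrow> 'm \<Rightarrow> 'm \<Rightarrow> bool" where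
  "is_coalgebra C A d e \<longleftrightarrow> A \<in> Ob C \<and>
     hom C d A (TnO C A A) \<and> hom C e A (Unt C) \<and>
     Cmp C (TnM C d (Idm C A)) d = Cmp C (TnM C (Idm C A) d) d \<and>
     Cmp C (TnM C e (Idm C A)) d = Idm C A \<and>
     Cmp C (TnM C (Idm C A) e) d = Idm C A"

definition is_frobenius_algebra :: "('o,'m) smc \<Rightarrow> 'o \<Rightarrow> 'm \<Rightarrow> 'm \<Rightarrow> 'm \<Rightarrow> 'm \<Rightarrow> bool" where
  "is_frobenius_algebra C A m u d e \<longleftrightarrow>
     is_algebra C A m u \<and> is_coalgebra C A d e \<and>
     Cmp C (TnM C m (Idm C A)) (TnM C (Idm C A) d) = Cmp C d m \<and>
     Cmp C d m = Cmp C (TnM C (Idm C A) m) (TnM C d (Idm C A))"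

definition is_frobenius_morphism ::
  "('o,'m) smc \<Rightarrow> 'o \<Rightarrow> 'm \<Rightarrow> 'm \<Rightarrow> 'm \<Rightarrow> 'm \<Rightarrow>
                  'o \<Rightarrow> 'm \<Rightarrow> 'm \<Rightarrow> 'm \<Rightarrow> 'm \<Rightarrow> 'm \<Rightarrow> bool" where
  "is_frobenius_morphism C A m u d e B m' u' d' e' f \<longleftrightarrow>
     hom C f A B \<and>
     Cmp C f m = Cmp C m' (TnM C f f) \<and> Cmp C f u = u' \<and>
     Cmp C d' f = Cmp C (TnM C f f) d \<and> Cmp C e' f = e"

record ('o,'m) int_hopf =
  hob  :: "'o"
  hm   :: "'m"
  hu   :: "'m"
  hD   :: "'m"
  he   :: "'m"
  hS   :: "'m"
  hSi  :: "'m"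
  hL   :: "'m"
  hl   :: "'m"

definition is_int_hopf :: "('o,'m) smc \<Rightarrow> ('o,'m) int_hopf \<Rightarrow> bool" where
  "is_int_hopf C H \<longleftrightarrow>
    (let A = hob H; m = hm H; u = hu H; d = hD H; e = he H; S = hS H; Si = hSi H;
         L = hL H; l = hl H; i = Idm C A in
     is_algebra C A m u \<and> is_coalgebra C A d e \<and>
     \<comment> \<open>Delta and epsilon are algebra morphisms (H \<otimes> H with the algebra structure via c)\<close>
     Cmp C d m = Cmp C (Cmp C (TnM C m m) (TnM C i (TnM C (Sy C A A) i))) (TnM C d d) \<and>
     Cmp C d u = TnM C u u \<and>
     Cmp C e m = TnM C e e \<and>
     Cmp C e u = Idm C (Unt C) \<and>
     
     hom C S A A \<and>
     Cmp C (Cmp C m (TnM C S i)) d = Cmp C u e \<and>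
     Cmp C (Cmp C m (TnM C i S)) d = Cmp C u e \<and>
     
     hom C Si A A \<and> Cmp C S Si = i \<and> Cmp C Si S = i \<and>
     
     hom C L (Unt C) A \<and> Cmp C m (TnM C i L) = Cmp C L e \<and>
     hom C l A (Unt C) \<and> Cmp C (TnM C l i) d = Cmp C u l \<and>
     Cmp C l L = Idm C (Unt C))"

definition is_int_hopf_morphism ::
  "('o,'m) smc \<Rightarrow> ('o,'m) int_hopf \<Rightarrow> ('o,'m) int_hopf \<Rightarrow> 'm \<Rightarrow> bool" where
  "is_int_hopf_morphism C H K f \<longleftrightarrow>
     hom C f (hob H) (hob K) \<and>
     Cmp C f (hm H) = Cmp C (hm K) (TnM C f f) \<and> Cmp C f (hu H) = hu K \<and>
     Cmp C (hD K) f = Cmp C (TnM C f f) (hD H) \<and> Cmp C (he K) f = he H \<and>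
     Cmp C f (hL H) = hL K \<and> Cmp C (hl K) f = hl H"

definition frob_comult :: "('o,'m) smc \<Rightarrow> ('o,'m) int_hopf \<Rightarrow> 'm" where
  "frob_comult C H =
     Cmp C (TnM C (hm H) (hS H)) (TnM C (Idm C (hob H)) (Cmp C (hD H) (hL H)))"

end

theory Submission
  imports Defs
begin

text \<open>
  Write \<open>F = (m \<otimes> S) (id \<otimes> \<Delta>\<Lambda>)\<close>, i.e. \<open>F(x) = x \<Lambda>\<^sub>1 \<otimes> S(\<Lambda>\<^sub>2)\<close> in Sweedler notation. The relation
  \<open>(m \<otimes> id)(id \<otimes> F) = F m\<close> is just associativity. For the other Frobenius relation one rewrites
  \<open>F(x) = \<Lambda>\<^sub>1 \<otimes> S(\<Lambda>\<^sub>2) x\<close>, which rests on the anti-multiplicativity of \<open>S\<close>; this in turn is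
  obtained from the formula \<open>S\<^sup>-\<^sup>1(x) = \<lambda>(x \<Lambda>\<^sub>1) \<Lambda>\<^sub>2\<close>. Coassociativity of \<open>F\<close> follows from the two
  Frobenius relations and the unit. The counit laws are \<open>\<lambda>(x \<Lambda>\<^sub>1) S(\<Lambda>\<^sub>2) = x\<close>, a consequence of the
  cointegral property, and \<open>x \<Lambda>\<^sub>1 \<lambda>(S(\<Lambda>\<^sub>2)) = x\<close>, which needs \<open>\<lambda>(S \<Lambda>) = 1\<close> and the
  anti-comultiplicativity of \<open>S\<close>, itself the dual of anti-multiplicativity. Finally, a morphism of
  integral Hopf algebras commutes with the antipodes (uniqueness of convolution inverses) and
  therefore preserves \<open>F\<close>.
\<close>

section \<open>Strict symmetric monoidal categories\<close>

locale strict_smc =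
  fixes C :: "('o,'m) smc"
  assumes smc: "strict_symmetric_monoidal_cat C"
begin

lemma Dom_Cod_in_Ob[simp]: "f \<in> Ar C \<Longrightarrow> Dom C f \<in> Ob C \<and> Cod C f \<in> Ob C"
  using smc unfolding strict_symmetric_monoidal_cat_def by (elim conjE) simp

lemma Idm_hom: "A \<in> Ob C \<Longrightarrow> hom C (Idm C A) A A"
  using smc unfolding strict_symmetric_monoidal_cat_def by (elim conjE) simp

lemma Cmp_hom: "hom C f A B \<Longrightarrow> hom C g B D \<Longrightarrow> hom C (Cmp C g f) A D"
  using smc unfolding strict_symmetric_monoidal_cat_def by (elim conjE) simp

lemma Cmp_assoc_hom: "hom C f A B \<Longrightarrow> hom C g B D \<Longrightarrow> hom C h D E \<Longrightarrow>
    Cmp C h (Cmp C g f) = Cmp C (Cmp C h g) f"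
  using smc unfolding strict_symmetric_monoidal_cat_def by (elim conjE) blast

lemma Cmp_Idm_hom: "hom C f A B \<Longrightarrow> Cmp C f (Idm C A) = f \<and> Cmp C (Idm C B) f = f"
  using smc unfolding strict_symmetric_monoidal_cat_def by (elim conjE) simp

lemma Unt_in_Ob[simp]: "Unt C \<in> Ob C"
  using smc unfolding strict_symmetric_monoidal_cat_def by (elim conjE) simp

lemma TnO_in_Ob[simp]: "A \<in> Ob C \<Longrightarrow> B \<in> Ob C \<Longrightarrow> TnO C A B \<in> Ob C"
  using smc unfolding strict_symmetric_monoidal_cat_def by (elim conjE) simp

lemma TnM_hom: "hom C f A B \<Longrightarrow> hom C g A' B' \<Longrightarrow> hom C (TnM C f g) (TnO C A A') (TnO C B B')"
  using smc unfolding strict_symmetric_monoidal_cat_def by (elim conjE) simp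

lemma TnM_Idm: "A \<in> Ob C \<Longrightarrow> B \<in> Ob C \<Longrightarrow> TnM C (Idm C A) (Idm C B) = Idm C (TnO C A B)"
  using smc unfolding strict_symmetric_monoidal_cat_def by (elim conjE) simp

lemma TnM_Cmp_hom:
  assumes "hom C f A B" "hom C g B D" "hom C f' A' B'" "hom C g' B' D'"
  shows "TnM C (Cmp C g f) (Cmp C g' f') = Cmp C (TnM C g g') (TnM C f f')"
proof -
  have "\<forall>f g f' g' A B D A' B' D'. hom C f A B \<longrightarrow> hom C g B D \<longrightarrow>
      hom C f' A' B' \<longrightarrow> hom C g' B' D' \<longrightarrow>
      TnM C (Cmp C g f) (Cmp C g' f') = Cmp C (TnM C g g') (TnM C f f')"
    using smc unfolding strict_symmetric_monoidal_cat_def by (elim conjE) assumption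
  then show ?thesis using assms by blast
qed

lemma TnO_assoc[simp]: "A \<in> Ob C \<Longrightarrow> B \<in> Ob C \<Longrightarrow> D \<in> Ob C \<Longrightarrow>
    TnO C (TnO C A B) D = TnO C A (TnO C B D)"
  using smc unfolding strict_symmetric_monoidal_cat_def by (elim conjE) simp

lemma TnO_Unt[simp]: "A \<in> Ob C \<Longrightarrow> TnO C (Unt C) A = A \<and> TnO C A (Unt C) = A"
  using smc unfolding strict_symmetric_monoidal_cat_def by (elim conjE) simp

lemma TnM_assoc: "f \<in> Ar C \<Longrightarrow> g \<in> Ar C \<Longrightarrow> h \<in> Ar C \<Longrightarrow>
    TnM C (TnM C f g) h = TnM C f (TnM C g h)"
  using smc unfolding strict_symmetric_monoidal_cat_def by (elim conjE) simp

lemma TnM_Idm_Unt[simp]: "f \<in> Ar C \<Longrightarrow> TnM C (Idm C (Unt C)) f = f \<and> TnM C f (Idm C (Unt C)) = f"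
  using smc unfolding strict_symmetric_monoidal_cat_def by (elim conjE) simp

lemma Sy_hom: "A \<in> Ob C \<Longrightarrow> B \<in> Ob C \<Longrightarrow> hom C (Sy C A B) (TnO C A B) (TnO C B A)"
  using smc unfolding strict_symmetric_monoidal_cat_def by (elim conjE) simp

lemma Sy_natural: "hom C f A A' \<Longrightarrow> hom C g B B' \<Longrightarrow>
    Cmp C (Sy C A' B') (TnM C f g) = Cmp C (TnM C g f) (Sy C A B)"
  using smc unfolding strict_symmetric_monoidal_cat_def by (elim conjE) simp

lemma Sy_Sy: "A \<in> Ob C \<Longrightarrow> B \<in> Ob C \<Longrightarrow> Cmp C (Sy C B A) (Sy C A B) = Idm C (TnO C A B)"
  using smc unfolding strict_symmetric_monoidal_cat_def by (elim conjE) simp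

lemma Sy_TnO_right: "A \<in> Ob C \<Longrightarrow> B \<in> Ob C \<Longrightarrow> D \<in> Ob C \<Longrightarrow>
    Sy C A (TnO C B D) = Cmp C (TnM C (Idm C B) (Sy C A D)) (TnM C (Sy C A B) (Idm C D))"
  using smc unfolding strict_symmetric_monoidal_cat_def by (elim conjE) simp

lemma Sy_TnO_left: "A \<in> Ob C \<Longrightarrow> B \<in> Ob C \<Longrightarrow> D \<in> Ob C \<Longrightarrow>
    Sy C (TnO C A B) D = Cmp C (TnM C (Sy C A D) (Idm C B)) (TnM C (Idm C A) (Sy C B D))"
  using smc unfolding strict_symmetric_monoidal_cat_def by (elim conjE) simp

lemma Idm_arr[simp]:
  "A \<in> Ob C \<Longrightarrow> Idm C A \<in> Ar C" "A \<in> Ob C \<Longrightarrow> Dom C (Idm C A) = A"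
  "A \<in> Ob C \<Longrightarrow> Cod C (Idm C A) = A"
  using Idm_hom by (auto simp: hom_def)

lemma Cmp_arr[simp]:
  "f \<in> Ar C \<Longrightarrow> g \<in> Ar C \<Longrightarrow> Cod C f = Dom C g \<Longrightarrow> Cmp C g f \<in> Ar C"
  "f \<in> Ar C \<Longrightarrow> g \<in> Ar C \<Longrightarrow> Cod C f = Dom C g \<Longrightarrow> Dom C (Cmp C g f) = Dom C f"
  "f \<in> Ar C \<Longrightarrow> g \<in> Ar C \<Longrightarrow> Cod C f = Dom C g \<Longrightarrow> Cod C (Cmp C g f) = Cod C g"
  using Cmp_hom[of f "Dom C f" "Cod C f" g "Cod C g"] by (auto simp: hom_def)

lemma TnM_arr[simp]:
  "f \<in> Ar C \<Longrightarrow> g \<in> Ar C \<Longrightarrow> TnM C f g \<in> Ar C"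
  "f \<in> Ar C \<Longrightarrow> g \<in> Ar C \<Longrightarrow> Dom C (TnM C f g) = TnO C (Dom C f) (Dom C g)"
  "f \<in> Ar C \<Longrightarrow> g \<in> Ar C \<Longrightarrow> Cod C (TnM C f g) = TnO C (Cod C f) (Cod C g)"
  using TnM_hom[of f "Dom C f" "Cod C f" g "Dom C g" "Cod C g"] by (auto simp: hom_def)

lemma Sy_arr[simp]:
  "A \<in> Ob C \<Longrightarrow> B \<in> Ob C \<Longrightarrow> Sy C A B \<in> Ar C"
  "A \<in> Ob C \<Longrightarrow> B \<in> Ob C \<Longrightarrow> Dom C (Sy C A B) = TnO C A B"
  "A \<in> Ob C \<Longrightarrow> B \<in> Ob C \<Longrightarrow> Cod C (Sy C A B) = TnO C B A"
  using Sy_hom by (auto simp: hom_def)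

lemma Cmp_assoc:
  "f \<in> Ar C \<Longrightarrow> g \<in> Ar C \<Longrightarrow> h \<in> Ar C \<Longrightarrow> Cod C f = Dom C g \<Longrightarrow> Cod C g = Dom C h \<Longrightarrow>
   Cmp C (Cmp C h g) f = Cmp C h (Cmp C g f)"
  using Cmp_assoc_hom[of f "Dom C f" "Cod C f" g "Cod C g" h "Cod C h"] by (auto simp: hom_def)

lemma Cmp_Idm_left[simp]: "f \<in> Ar C \<Longrightarrow> Cod C f = B \<Longrightarrow> Cmp C (Idm C B) f = f"
  and Cmp_Idm_right[simp]: "f \<in> Ar C \<Longrightarrow> Dom C f = B \<Longrightarrow> Cmp C f (Idm C B) = f"
  using Cmp_Idm_hom[of f "Dom C f" "Cod C f"] by (auto simp: hom_def)

lemma interchange: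
  "f \<in> Ar C \<Longrightarrow> g \<in> Ar C \<Longrightarrow> f' \<in> Ar C \<Longrightarrow> g' \<in> Ar C \<Longrightarrow>
   Cod C f = Dom C g \<Longrightarrow> Cod C f' = Dom C g' \<Longrightarrow>
   Cmp C (TnM C g g') (TnM C f f') = TnM C (Cmp C g f) (Cmp C g' f')"
  using TnM_Cmp_hom[of f "Dom C f" "Cod C f" g "Cod C g" f' "Dom C f'" "Cod C f'" g' "Cod C g'"]
  by (auto simp: hom_def)

text \<open>The hexagon with \<open>B = D = \<one>\<close> shows that \<open>c\<^sub>A\<^sub>,\<^sub>\<one>\<close> is an idempotent; it is invertible.\<close>

lemma Sy_Unt_right: "A \<in> Ob C \<Longrightarrow> Sy C A (Unt C) = Idm C A"
proof -
  assume A: "A \<in> Ob C"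
  define s where "s = Sy C A (Unt C)"
  define t where "t = Sy C (Unt C) A"
  have s: "s \<in> Ar C" "Dom C s = A" "Cod C s = A" and t: "t \<in> Ar C" "Dom C t = A" "Cod C t = A"
    using A unfolding s_def t_def by simp_all
  have idem: "Cmp C s s = s" using Sy_TnO_right[of A "Unt C" "Unt C"] A unfolding s_def by simp
  have inv: "Cmp C t s = Idm C A" using Sy_Sy[of A "Unt C"] A unfolding s_def t_def by simp
  have "s = Cmp C (Cmp C t s) s" using inv s by simp
  also have "\<dots> = Cmp C t (Cmp C s s)" using s t by (simp add: Cmp_assoc)
  also have "\<dots> = Idm C A" using idem inv by simp
  finally show ?thesis unfolding s_def .
qed

lemma Sy_Unt_left: "A \<in> Ob C \<Longrightarrow> Sy C (Unt C) A = Idm C A"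
  using Sy_Sy[of "Unt C" A] by (simp add: Sy_Unt_right)

end

section \<open>String diagrams as words of layers\<close>

definition tpow :: "('o,'m) smc \<Rightarrow> 'o \<Rightarrow> nat \<Rightarrow> 'o" where
  "tpow C A n = (TnO C A ^^ n) (Unt C)"

definition layer :: "('o,'m) smc \<Rightarrow> 'o \<Rightarrow> nat \<Rightarrow> 'm \<Rightarrow> nat \<Rightarrow> 'm" where
  "layer C A n g k = TnM C (Idm C (tpow C A n)) (TnM C g (Idm C (tpow C A k)))"

locale smc_object = strict_smc +
  fixes A :: 'o
  assumes A_in_Ob[simp]: "A \<in> Ob C"
begin

abbreviation P where "P n \<equiv> tpow C A n"

lemma tpow_0: "P 0 = Unt C"
  and tpow_Suc: "P (Suc n) = TnO C A (P n)"
  by (simp_all add: tpow_def)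

lemma tpow_in_Ob[simp]: "P n \<in> Ob C"
  by (induction n) (auto simp: tpow_0 tpow_Suc)

lemma TnO_tpow[simp]: "TnO C (P a) (P b) = P (a + b)"
  by (induction a) (auto simp: tpow_0 tpow_Suc)

lemma tpow_1: "P 1 = A" "P (Suc 0) = A"
  and tpow_2: "P 2 = TnO C A A"
  and tpow_3: "P 3 = TnO C A (TnO C A A)"
  by (simp_all add: numeral_3_eq_3 numeral_2_eq_2 tpow_Suc tpow_0)

lemma Idm_tpow_add: "Idm C (P (a + b)) = TnM C (Idm C (P a)) (Idm C (P b))"
  by (simp add: TnM_Idm)

lemma layer_arr[simp]:
  "g \<in> Ar C \<Longrightarrow> layer C A n g k \<in> Ar C"
  "g \<in> Ar C \<Longrightarrow> Dom C (layer C A n g k) = TnO C (P n) (TnO C (Dom C g) (P k))"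
  "g \<in> Ar C \<Longrightarrow> Cod C (layer C A n g k) = TnO C (P n) (TnO C (Cod C g) (P k))"
  by (auto simp: layer_def)

lemma layer_Cmp: "f \<in> Ar C \<Longrightarrow> g \<in> Ar C \<Longrightarrow> Cod C f = Dom C g \<Longrightarrow>
    layer C A n (Cmp C g f) k = Cmp C (layer C A n g k) (layer C A n f k)"
  unfolding layer_def by (simp add: interchange)

lemma layer_Idm[simp]: "layer C A n (Idm C (P a)) k = Idm C (P (n + a + k))"
  unfolding layer_def by (simp add: TnM_Idm add.assoc)

lemma layer_layer:
  assumes "g \<in> Ar C"
  shows "layer C A n (layer C A a g b) k = layer C A (n + a) g (b + k)"
proof -
  have merge: "TnM C (Idm C (P n)) (TnM C (Idm C (P a)) X) = TnM C (Idm C (P (n + a))) X"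
    if "X \<in> Ar C" for X
    using that by (simp add: TnM_assoc[symmetric] TnM_Idm)
  show ?thesis using assms unfolding layer_def by (simp add: TnM_assoc merge TnM_Idm)
qed

lemma layer_0:
  "g \<in> Ar C \<Longrightarrow> layer C A 0 g 0 = g"
  "g \<in> Ar C \<Longrightarrow> layer C A 0 g k = TnM C g (Idm C (P k))"
  "g \<in> Ar C \<Longrightarrow> layer C A n g 0 = TnM C (Idm C (P n)) g"
  unfolding layer_def by (simp_all add: tpow_0)

lemma layer_exchange:
  assumes g: "g \<in> Ar C" "Dom C g = P a" "Cod C g = P b"
    and h: "h \<in> Ar C" "Dom C h = P c" "Cod C h = P d"
  shows "Cmp C (layer C A 0 g (p + d)) (layer C A (a + p) h 0)
       = Cmp C (layer C A (b + p) h 0) (layer C A 0 g (p + c))"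
proof -
  have "Cmp C (layer C A 0 g (p + d)) (layer C A (a + p) h 0) = TnM C g (TnM C (Idm C (P p)) h)"
    using g h unfolding layer_0(2,3)[OF g(1)] layer_0(2,3)[OF h(1)] Idm_tpow_add
    by (simp add: TnM_assoc interchange)
  moreover have "Cmp C (layer C A (b + p) h 0) (layer C A 0 g (p + c)) = TnM C g (TnM C (Idm C (P p)) h)"
    using g h unfolding layer_0(2,3)[OF g(1)] layer_0(2,3)[OF h(1)] Idm_tpow_add
    by (simp add: TnM_assoc interchange)
  ultimately show ?thesis by simp
qed

end

text \<open>String diagrams in a single object \<open>A\<close> are encoded as words of layers. The layer
  \<open>(n, g, k)\<close> stands for \<open>id\<^bsub>A\<^sup>n\<^esub> \<otimes> g \<otimes> id\<^bsub>A\<^sup>k\<^esub>\<close>, and the word \<open>[x\<^sub>1, \<dots>, x\<^sub>r]\<close> for the composite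
  \<open>x\<^sub>1 \<circ> \<dots> \<circ> x\<^sub>r\<close>, so the layer applied first comes last.\<close>

datatype gen = Mult | Unit | Comult | Counit | Antip | AntipInv | Integral | Cointegral | Swap | Frob

fun gen_in :: "gen \<Rightarrow> nat" where
  "gen_in Mult = 2" | "gen_in Unit = 0" | "gen_in Comult = 1" | "gen_in Counit = 1"
| "gen_in Antip = 1" | "gen_in AntipInv = 1" | "gen_in Integral = 0" | "gen_in Cointegral = 1"
| "gen_in Swap = 2" | "gen_in Frob = 1"

fun gen_out :: "gen \<Rightarrow> nat" where
  "gen_out Mult = 1" | "gen_out Unit = 1" | "gen_out Comult = 2" | "gen_out Counit = 0"
| "gen_out Antip = 1" | "gen_out AntipInv = 1" | "gen_out Integral = 1" | "gen_out Cointegral = 0"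
| "gen_out Swap = 2" | "gen_out Frob = 2"

type_synonym word = "(nat \<times> gen \<times> nat) list"

fun layer_in :: "nat \<times> gen \<times> nat \<Rightarrow> nat" where
  "layer_in (n, g, k) = n + gen_in g + k"

fun layer_out :: "nat \<times> gen \<times> nat \<Rightarrow> nat" where
  "layer_out (n, g, k) = n + gen_out g + k"

fun word_out :: "nat \<Rightarrow> word \<Rightarrow> nat" where
  "word_out N [] = N"
| "word_out N (x # xs) = layer_out x"

fun well_typed :: "nat \<Rightarrow> word \<Rightarrow> bool" where
  "well_typed N [] = True"
| "well_typed N (x # xs) = (well_typed N xs \<and> layer_in x = word_out N xs)"

fun shift :: "nat \<Rightarrow> nat \<Rightarrow> nat \<times> gen \<times> nat \<Rightarrow> nat \<times> gen \<times> nat" where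
  "shift n k (a, g, b) = (n + a, g, b + k)"

fun interp :: "('o,'m) smc \<Rightarrow> 'o \<Rightarrow> (gen \<Rightarrow> 'm) \<Rightarrow> nat \<Rightarrow> word \<Rightarrow> 'm" where
  "interp C A I N [] = Idm C (tpow C A N)"
| "interp C A I N ((n, g, k) # xs) = Cmp C (layer C A n (I g) k) (interp C A I N xs)"

declare interp.simps[simp del]

lemma word_out_append[simp]: "word_out N (xs @ ys) = word_out (word_out N ys) xs"
  by (induction xs) auto

lemma well_typed_append: "well_typed N (xs @ ys) \<longleftrightarrow> well_typed N ys \<and> well_typed (word_out N ys) xs"
  by (induction xs) auto

lemma well_typed_append_word_out:
  "well_typed N (xs @ ys) \<Longrightarrow> xs \<noteq> [] \<Longrightarrow> word_out N ys = layer_in (last xs)"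
  by (induction xs) auto

lemma layer_in_shift[simp]: "layer_in (shift n k x) = n + layer_in x + k"
  and layer_out_shift[simp]: "layer_out (shift n k x) = n + layer_out x + k"
  by (cases x; simp)+

lemma word_out_shift: "word_out (n + M + k) (map (shift n k) xs) = n + word_out M xs + k"
  by (induction xs) auto

lemma well_typed_shift: "well_typed (n + M + k) (map (shift n k) xs) = well_typed M xs"
  by (induction xs) (auto simp: word_out_shift)

locale word_interp = smc_object C A for C :: "('o,'m) smc" and A +
  fixes I :: "gen \<Rightarrow> 'm"
  assumes I_arr[simp]: "I g \<in> Ar C" "Dom C (I g) = P (gen_in g)" "Cod C (I g) = P (gen_out g)"
begin

abbreviation ev where "ev N xs \<equiv> interp C A I N xs"

lemma interp_arr[simp]:
  assumes "well_typed N xs"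
  shows "ev N xs \<in> Ar C" "Dom C (ev N xs) = P N" "Cod C (ev N xs) = P (word_out N xs)"
proof -
  have "ev N xs \<in> Ar C \<and> Dom C (ev N xs) = P N \<and> Cod C (ev N xs) = P (word_out N xs)"
    using assms by (induction xs) (auto simp: interp.simps add.assoc)
  then show "ev N xs \<in> Ar C" "Dom C (ev N xs) = P N" "Cod C (ev N xs) = P (word_out N xs)"
    by simp_all
qed

lemma interp_append:
  "well_typed N (xs @ ys) \<Longrightarrow> ev N (xs @ ys) = Cmp C (ev (word_out N ys) xs) (ev N ys)"
proof (induction xs)
  case Nil
  then show ?case by (simp add: interp.simps)
next
  case (Cons x xs)
  obtain n g k where x: "x = (n, g, k)" by (cases x)
  have wt: "well_typed N ys" "well_typed (word_out N ys) xs"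
    "n + gen_in g + k = word_out (word_out N ys) xs"
    using Cons.prems by (auto simp: x well_typed_append)
  have "ev N ((x # xs) @ ys) = Cmp C (layer C A n (I g) k) (Cmp C (ev (word_out N ys) xs) (ev N ys))"
    using Cons wt by (simp add: x interp.simps well_typed_append)
  also have "\<dots> = Cmp C (Cmp C (layer C A n (I g) k) (ev (word_out N ys) xs)) (ev N ys)"
    using wt by (subst Cmp_assoc) (simp_all add: add.assoc)
  finally show ?case by (simp add: x interp.simps)
qed

lemma interp_shift:
  "well_typed M xs \<Longrightarrow> ev (n + M + k) (map (shift n k) xs) = layer C A n (ev M xs) k"
proof (induction xs)
  case Nil
  then show ?case by (simp add: interp.simps)
next
  case (Cons x xs)
  obtain a g b where x: "x = (a, g, b)" by (cases x)
  have wt: "well_typed M xs" "a + gen_in g + b = word_out M xs"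
    using Cons.prems by (auto simp: x)
  have "ev (n + M + k) (map (shift n k) (x # xs))
      = Cmp C (layer C A n (layer C A a (I g) b) k) (layer C A n (ev M xs) k)"
    using Cons wt by (simp add: x interp.simps layer_layer)
  also have "\<dots> = layer C A n (Cmp C (layer C A a (I g) b) (ev M xs)) k"
    using wt by (subst layer_Cmp) (simp_all add: add.assoc)
  finally show ?case by (simp add: x interp.simps)
qed

lemma interp_append_cong:
  assumes "well_typed N (Q @ R)" "well_typed N (Q @ R')" "ev N R = ev N R'"
  shows "ev N (Q @ R) = ev N (Q @ R')"
proof (cases "Q = []")
  case False
  then have "word_out N R = word_out N R'"
    using well_typed_append_word_out assms(1,2) by metis
  then show ?thesis using assms by (simp add: interp_append)
qed (use assms in simp)

text \<open>Rewriting inside a word: the subword of \<open>L\<close> starting at position \<open>i\<close> is a shifted copy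
  of \<open>xs\<close>, and replacing it by the same shift of \<open>ys\<close> gives \<open>L'\<close>.  All hypotheses other than
  \<open>ev M xs = ev M ys\<close> are decided by evaluation once \<open>i\<close>, \<open>n\<close> and \<open>k\<close> are given.\<close>

lemma interp_rewrite:
  assumes eq: "ev M xs = ev M ys"
    and prefix: "take i L = take i L'"
    and suffix: "drop (i + length xs) L = drop (i + length ys) L'"
    and occ: "take (length xs) (drop i L) = map (shift n k) xs"
    and occ': "take (length ys) (drop i L') = map (shift n k) ys"
    and width: "word_out N (drop (i + length xs) L) = n + M + k"
    and wt: "well_typed N L" "well_typed N L'"
  shows "ev N L = ev N L'"
proof -
  define Q where "Q = take i L"
  define R where "R = drop (i + length xs) L"
  define W where "W = map (shift n k) xs"
  define W' where "W' = map (shift n k) ys"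
  have "L = take i L @ take (length xs) (drop i L) @ drop (i + length xs) L"
    by (metis append_take_drop_id drop_drop add.commute)
  then have L: "L = Q @ W @ R" using occ unfolding Q_def R_def W_def by simp
  have "L' = take i L' @ take (length ys) (drop i L') @ drop (i + length ys) L'"
    by (metis append_take_drop_id drop_drop add.commute)
  then have L': "L' = Q @ W' @ R" using occ' prefix suffix unfolding Q_def R_def W'_def by simp
  have wt': "well_typed N (W @ R)" "well_typed N (W' @ R)"
    using wt L L' well_typed_append by auto
  then have "well_typed (n + M + k) W" "well_typed (n + M + k) W'" "well_typed N R"
    using width well_typed_append unfolding R_def by auto
  then have wxs: "well_typed M xs" and wys: "well_typed M ys"
    unfolding W_def W'_def well_typed_shift by auto
  have "ev N (W @ R) = Cmp C (layer C A n (ev M xs) k) (ev N R)"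
    using wt' width wxs by (simp add: interp_append W_def interp_shift R_def)
  also have "\<dots> = ev N (W' @ R)"
    using wt' width wys by (simp add: eq interp_append W'_def interp_shift R_def)
  finally show ?thesis
    using interp_append_cong[where Q = Q and R = "W @ R" and R' = "W' @ R"] wt L L' by simp
qed

lemma interp_exchange:
  "ev (gen_in g + p + gen_in h) [(0, g, p + gen_out h), (gen_in g + p, h, 0)]
 = ev (gen_in g + p + gen_in h) [(gen_out g + p, h, 0), (0, g, p + gen_in h)]"
  using layer_exchange[of "I g" "gen_in g" "gen_out g" "I h" "gen_in h" "gen_out h" p]
  by (simp add: interp.simps add.assoc add.left_commute add.commute)

end

section \<open>Integral Hopf algebras\<close>

fun hopf_gen :: "('o,'m) smc \<Rightarrow> ('o,'m) int_hopf \<Rightarrow> gen \<Rightarrow> 'm" where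
  "hopf_gen C H Mult = hm H" | "hopf_gen C H Unit = hu H"
| "hopf_gen C H Comult = hD H" | "hopf_gen C H Counit = he H"
| "hopf_gen C H Antip = hS H" | "hopf_gen C H AntipInv = hSi H"
| "hopf_gen C H Integral = hL H" | "hopf_gen C H Cointegral = hl H"
| "hopf_gen C H Swap = Sy C (hob H) (hob H)" | "hopf_gen C H Frob = frob_comult C H"

locale int_hopf_alg = strict_smc C for C :: "('o,'m) smc" +
  fixes H :: "('o,'m) int_hopf"
  assumes int_hopf: "is_int_hopf C H"
begin

abbreviation "A \<equiv> hob H"
abbreviation "mu \<equiv> hm H"
abbreviation "eta \<equiv> hu H"
abbreviation "delta \<equiv> hD H"
abbreviation "eps \<equiv> he H"
abbreviation "S \<equiv> hS H"
abbreviation "Sinv \<equiv> hSi H"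
abbreviation "Lam \<equiv> hL H"
abbreviation "lam \<equiv> hl H"
abbreviation "idA \<equiv> Idm C (hob H)"
abbreviation "sw \<equiv> Sy C (hob H) (hob H)"

lemmas int_hopf_unfolded = int_hopf[unfolded is_int_hopf_def Let_def is_algebra_def is_coalgebra_def]

lemma A_in_Ob[simp]: "A \<in> Ob C" using int_hopf_unfolded by blast

lemma structure_hom:
  "hom C mu (TnO C A A) A" "hom C eta (Unt C) A" "hom C delta A (TnO C A A)" "hom C eps A (Unt C)"
  "hom C S A A" "hom C Sinv A A" "hom C Lam (Unt C) A" "hom C lam A (Unt C)"
  using int_hopf_unfolded by blast+

lemma structure_arr[simp]:
  "mu \<in> Ar C" "Dom C mu = TnO C A A" "Cod C mu = A"
  "eta \<in> Ar C" "Dom C eta = Unt C" "Cod C eta = A"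
  "delta \<in> Ar C" "Dom C delta = A" "Cod C delta = TnO C A A"
  "eps \<in> Ar C" "Dom C eps = A" "Cod C eps = Unt C"
  "S \<in> Ar C" "Dom C S = A" "Cod C S = A"
  "Sinv \<in> Ar C" "Dom C Sinv = A" "Cod C Sinv = A"
  "Lam \<in> Ar C" "Dom C Lam = Unt C" "Cod C Lam = A"
  "lam \<in> Ar C" "Dom C lam = A" "Cod C lam = Unt C"
  using structure_hom by (auto simp: hom_def)

lemma frob_comult_arr[simp]:
  "frob_comult C H \<in> Ar C" "Dom C (frob_comult C H) = A" "Cod C (frob_comult C H) = TnO C A A"
  unfolding frob_comult_def by simp_all

lemma mult_assoc: "Cmp C mu (TnM C mu idA) = Cmp C mu (TnM C idA mu)"
  and mult_unit_left: "Cmp C mu (TnM C eta idA) = idA"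
  and mult_unit_right: "Cmp C mu (TnM C idA eta) = idA"
  and comult_coassoc: "Cmp C (TnM C delta idA) delta = Cmp C (TnM C idA delta) delta"
  and comult_counit_left: "Cmp C (TnM C eps idA) delta = idA"
  and comult_counit_right: "Cmp C (TnM C idA eps) delta = idA"
  and comult_mult:
    "Cmp C delta mu = Cmp C (Cmp C (TnM C mu mu) (TnM C idA (TnM C sw idA))) (TnM C delta delta)"
  and comult_unit: "Cmp C delta eta = TnM C eta eta"
  and counit_mult: "Cmp C eps mu = TnM C eps eps"
  and counit_unit: "Cmp C eps eta = Idm C (Unt C)"
  and antipode_left: "Cmp C (Cmp C mu (TnM C S idA)) delta = Cmp C eta eps"
  and antipode_right: "Cmp C (Cmp C mu (TnM C idA S)) delta = Cmp C eta eps"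
  and antipode_antipode_inv: "Cmp C S Sinv = idA"
  and antipode_inv_antipode: "Cmp C Sinv S = idA"
  and integral: "Cmp C mu (TnM C idA Lam) = Cmp C Lam eps"
  and cointegral: "Cmp C (TnM C lam idA) delta = Cmp C eta lam"
  and cointegral_integral: "Cmp C lam Lam = Idm C (Unt C)"
  using int_hopf_unfolded by blast+

sublocale smc_object C A by unfold_locales simp

lemma hopf_gen_arr:
  "hopf_gen C H g \<in> Ar C \<and> Dom C (hopf_gen C H g) = P (gen_in g) \<and> Cod C (hopf_gen C H g) = P (gen_out g)"
  by (cases g) (simp_all add: tpow_0 tpow_1 tpow_2)

sublocale word_interp C A "hopf_gen C H"
  by unfold_locales (simp_all add: hopf_gen_arr)

lemmas word_simps = interp.simps layer_0 tpow_0 tpow_1 tpow_2 tpow_3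

lemma word_mult_assoc: "ev 3 [(0,Mult,0), (0,Mult,1)] = ev 3 [(0,Mult,0), (1,Mult,0)]"
  by (simp add: word_simps mult_assoc)

lemma word_mult_unit_left: "ev 1 [(0,Mult,0), (0,Unit,1)] = ev 1 []"
  by (simp add: word_simps mult_unit_left)

lemma word_mult_unit_right: "ev 1 [(0,Mult,0), (1,Unit,0)] = ev 1 []"
  by (simp add: word_simps mult_unit_right)

lemma word_comult_coassoc: "ev 1 [(0,Comult,1), (0,Comult,0)] = ev 1 [(1,Comult,0), (0,Comult,0)]"
  by (simp add: word_simps comult_coassoc)

lemma word_comult_counit_left: "ev 1 [(0,Counit,1), (0,Comult,0)] = ev 1 []"
  by (simp add: word_simps comult_counit_left)

lemma word_comult_counit_right: "ev 1 [(1,Counit,0), (0,Comult,0)] = ev 1 []"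
  by (simp add: word_simps comult_counit_right)

lemma word_comult_mult:
  "ev 2 [(0,Comult,0), (0,Mult,0)]
 = ev 2 [(0,Mult,1), (2,Mult,0), (1,Swap,1), (0,Comult,2), (1,Comult,0)]"
proof -
  have "TnM C mu mu = Cmp C (TnM C mu idA) (TnM C (Idm C (TnO C A A)) mu)"
    and "TnM C delta delta = Cmp C (TnM C delta (Idm C (TnO C A A))) (TnM C idA delta)"
    by (simp_all add: interchange)
  then show ?thesis using comult_mult by (simp add: word_simps Cmp_assoc layer_def)
qed

lemma word_counit_unit: "ev 0 [(0,Counit,0), (0,Unit,0)] = ev 0 []"
  using counit_unit by (simp add: word_simps)

lemma word_comult_unit: "ev 0 [(0,Comult,0), (0,Unit,0)] = ev 0 [(0,Unit,1), (0,Unit,0)]"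
proof -
  have "TnM C eta eta = Cmp C (TnM C eta idA) eta"
    using interchange[of "Idm C (Unt C)" eta eta idA] by simp
  then show ?thesis using comult_unit by (simp add: word_simps)
qed

lemma word_antipode_left: "ev 1 [(0,Mult,0), (0,Antip,1), (0,Comult,0)] = ev 1 [(0,Unit,0), (0,Counit,0)]"
  using antipode_left by (simp add: word_simps Cmp_assoc)

lemma word_antipode_right: "ev 1 [(0,Mult,0), (1,Antip,0), (0,Comult,0)] = ev 1 [(0,Unit,0), (0,Counit,0)]"
  using antipode_right by (simp add: word_simps Cmp_assoc)

lemma word_antipode_antipode_inv: "ev 1 [(0,Antip,0), (0,AntipInv,0)] = ev 1 []"
  using antipode_antipode_inv by (simp add: word_simps)

lemma word_antipode_inv_antipode: "ev 1 [(0,AntipInv,0), (0,Antip,0)] = ev 1 []"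
  using antipode_inv_antipode by (simp add: word_simps)

lemma word_integral: "ev 1 [(0,Mult,0), (1,Integral,0)] = ev 1 [(0,Integral,0), (0,Counit,0)]"
  using integral by (simp add: word_simps)

lemma word_cointegral: "ev 1 [(0,Cointegral,1), (0,Comult,0)] = ev 1 [(0,Unit,0), (0,Cointegral,0)]"
  using cointegral by (simp add: word_simps)

lemma word_cointegral_integral: "ev 0 [(0,Cointegral,0), (0,Integral,0)] = ev 0 []"
  using cointegral_integral by (simp add: word_simps)

lemma word_swap_swap: "ev 2 [(0,Swap,0), (0,Swap,0)] = ev 2 []"
  using Sy_Sy[of A A] by (simp add: word_simps)

lemma word_swap_natural_left:
  "g \<in> {Antip, AntipInv} \<Longrightarrow> ev 2 [(0,Swap,0), (0,g,1)] = ev 2 [(1,g,0), (0,Swap,0)]"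
  using Sy_natural[of S A A idA A A] Sy_natural[of Sinv A A idA A A] structure_hom Idm_hom[of A]
  by (auto simp: word_simps)

lemma word_swap_natural_right:
  "g \<in> {Antip, AntipInv} \<Longrightarrow> ev 2 [(0,Swap,0), (1,g,0)] = ev 2 [(0,g,1), (0,Swap,0)]"
  using Sy_natural[of idA A A S A A] Sy_natural[of idA A A Sinv A A] structure_hom Idm_hom[of A]
  by (auto simp: word_simps)

lemma word_swap_integral: "ev 1 [(0,Swap,0), (1,Integral,0)] = ev 1 [(0,Integral,1)]"
  using Sy_natural[of idA A A Lam "Unt C" A] structure_hom Idm_hom[of A]
  by (auto simp: word_simps Sy_Unt_right)

lemma word_swap_cointegral: "ev 2 [(0,Cointegral,1)] = ev 2 [(1,Cointegral,0), (0,Swap,0)]"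
  using Sy_natural[of lam A "Unt C" idA A A] structure_hom Idm_hom[of A]
  by (auto simp: word_simps Sy_Unt_left)

lemma word_swap_comult:
  "ev 2 [(1,Swap,0), (0,Swap,1), (1,Comult,0)] = ev 2 [(0,Comult,1), (0,Swap,0)]"
  using Sy_natural[of idA A A delta A "TnO C A A"] structure_hom Idm_hom[of A] Sy_TnO_right[of A A A]
  by (auto simp: word_simps Cmp_assoc layer_def)

lemma word_swap_cointegral_mult:
  "ev 3 [(0,Cointegral,1), (0,Mult,1), (1,Swap,0)] = ev 3 [(1,Cointegral,0), (1,Mult,0), (0,Swap,1)]"
proof -
  define h where "h = Cmp C lam mu"
  have h_hom: "hom C h (TnO C A A) (Unt C)" unfolding h_def by (simp add: hom_def)
  then have [simp]: "h \<in> Ar C" "Dom C h = TnO C A A" "Cod C h = Unt C" by (auto simp: hom_def)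
  have natural: "TnM C h idA = Cmp C (TnM C idA h) (Cmp C (TnM C sw idA) (TnM C idA sw))"
    using Sy_natural[OF h_hom Idm_hom[of A]] Sy_TnO_left[of A A A] by (simp add: Sy_Unt_left)
  have split: "TnM C h idA = Cmp C (TnM C lam idA) (TnM C mu idA)"
    "TnM C idA h = Cmp C (TnM C idA lam) (TnM C idA mu)"
    unfolding h_def by (simp_all add: interchange)
  have involution: "Cmp C (TnM C idA sw) (TnM C idA sw) = Idm C (TnO C A (TnO C A A))"
    by (simp add: interchange Sy_Sy TnM_Idm)
  have "Cmp C (TnM C lam idA) (Cmp C (TnM C mu idA) (TnM C idA sw))
      = Cmp C (TnM C h idA) (TnM C idA sw)" using split by (simp add: Cmp_assoc)
  also have "\<dots> = Cmp C (TnM C idA h) (Cmp C (TnM C sw idA) (Cmp C (TnM C idA sw) (TnM C idA sw)))"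
    unfolding natural by (simp add: Cmp_assoc)
  also have "\<dots> = Cmp C (TnM C idA lam) (Cmp C (TnM C idA mu) (TnM C sw idA))"
    unfolding involution split by (simp add: Cmp_assoc)
  finally show ?thesis by (simp add: word_simps)
qed

lemma word_frob_comult: "ev 1 [(0,Frob,0)] = ev 1 [(0,Mult,1), (2,Antip,0), (1,Comult,0), (1,Integral,0)]"
proof -
  have "TnM C mu S = Cmp C (TnM C mu idA) (TnM C (Idm C (TnO C A A)) S)"
    and "TnM C idA (Cmp C delta Lam) = Cmp C (TnM C idA delta) (TnM C idA Lam)"
    by (simp_all add: interchange)
  then show ?thesis by (simp add: word_simps frob_comult_def Cmp_assoc)
qed

end

section \<open>The antipode and the integrals\<close>

context int_hopf_alg
begin

(* \<lambda>(x\<^sub>1 \<Lambda>) x\<^sub>2 = x *)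
lemma cointegral_mult_comult_integral:
  "ev 1 [(0,Cointegral,1), (0,Mult,1), (1,Swap,0), (0,Comult,1), (1,Integral,0)] = ev 1 []"
proof -
  have "ev 1 [(0,Cointegral,1), (0,Mult,1), (1,Swap,0), (0,Comult,1), (1,Integral,0)]
      = ev 1 [(0,Cointegral,1), (0,Mult,1), (1,Swap,0), (2,Integral,0), (0,Comult,0)]"
    by (rule interp_rewrite[OF interp_exchange[of Comult 0 Integral], of 3 _ _ 0 0]) simp_all
  also have "\<dots> = ev 1 [(0,Cointegral,1), (0,Mult,1), (1,Integral,1), (0,Comult,0)]"
    by (rule interp_rewrite[OF word_swap_integral, of 2 _ _ 1 0]) simp_all
  also have "\<dots> = ev 1 [(0,Cointegral,1), (0,Integral,1), (0,Counit,1), (0,Comult,0)]"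
    by (rule interp_rewrite[OF word_integral, of 1 _ _ 0 1]) simp_all
  also have "\<dots> = ev 1 [(0,Counit,1), (0,Comult,0)]"
    by (rule interp_rewrite[OF word_cointegral_integral, of 0 _ _ 0 1]) simp_all
  also have "\<dots> = ev 1 []"
    by (rule interp_rewrite[OF word_comult_counit_left, of 0 _ _ 0 0]) simp_all
  finally show ?thesis .
qed

(* \<lambda>(x \<Lambda>\<^sub>1) S(\<Lambda>\<^sub>2) = \<lambda>(x\<^sub>1 \<Lambda>\<^sub>1) x\<^sub>2 \<Lambda>\<^sub>2 S(\<Lambda>\<^sub>3) *)
lemma cointegral_integral_antipode_expand:
  "ev 1 [(0,Cointegral,1), (0,Mult,1), (2,Antip,0), (1,Comult,0), (1,Integral,0)]
   = ev 1 [(0,Mult,0), (0,Cointegral,2), (0,Mult,2), (2,Mult,1), (1,Swap,2), (0,Comult,3), (3,Antip,0), (2,Comult,0),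
           (1,Comult,0), (1,Integral,0)]"
proof -
  have "ev 1 [(0,Cointegral,1), (0,Mult,1), (2,Antip,0), (1,Comult,0), (1,Integral,0)]
      = ev 1 [(0,Mult,0), (0,Unit,1), (0,Cointegral,1), (0,Mult,1), (2,Antip,0), (1,Comult,0), (1,Integral,0)]"
    by (rule interp_rewrite[OF word_mult_unit_left[symmetric], of 0 _ _ 0 0]) simp_all
  also have "\<dots> = ev 1 [(0,Mult,0), (0,Cointegral,2), (0,Comult,1), (0,Mult,1), (2,Antip,0), (1,Comult,0), (1,Integral,0)]"
    by (rule interp_rewrite[OF word_cointegral[symmetric], of 1 _ _ 0 1]) simp_all
  also have "\<dots> = ev 1 [(0,Mult,0), (0,Cointegral,2), (0,Mult,2), (2,Mult,1), (1,Swap,2), (0,Comult,3), (1,Comult,1),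
                             (2,Antip,0), (1,Comult,0), (1,Integral,0)]"
    by (rule interp_rewrite[OF word_comult_mult, of 2 _ _ 0 1]) simp_all
  also have "\<dots> = ev 1 [(0,Mult,0), (0,Cointegral,2), (0,Mult,2), (2,Mult,1), (1,Swap,2), (0,Comult,3), (3,Antip,0),
                             (1,Comult,1), (1,Comult,0), (1,Integral,0)]"
    by (rule interp_rewrite[OF interp_exchange[of Comult 0 Antip], of 6 _ _ 1 0]) simp_all
  also have "\<dots> = ev 1 [(0,Mult,0), (0,Cointegral,2), (0,Mult,2), (2,Mult,1), (1,Swap,2), (0,Comult,3), (3,Antip,0),
                             (2,Comult,0), (1,Comult,0), (1,Integral,0)]"
    by (rule interp_rewrite[OF word_comult_coassoc, of 7 _ _ 1 0]) simp_all
  finally show ?thesis .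
qed

(* \<lambda>(x\<^sub>1 \<Lambda>\<^sub>1) x\<^sub>2 \<Lambda>\<^sub>2 S(\<Lambda>\<^sub>3) = \<lambda>(x\<^sub>1 \<Lambda>) x\<^sub>2 *)
lemma cointegral_integral_antipode_contract:
  "ev 1 [(0,Mult,0), (0,Cointegral,2), (0,Mult,2), (2,Mult,1), (1,Swap,2), (0,Comult,3), (3,Antip,0), (2,Comult,0),
         (1,Comult,0), (1,Integral,0)]
   = ev 1 [(0,Cointegral,1), (0,Mult,1), (1,Swap,0), (0,Comult,1), (1,Integral,0)]"
proof -
  have "ev 1 [(0,Mult,0), (0,Cointegral,2), (0,Mult,2), (2,Mult,1), (1,Swap,2), (0,Comult,3), (3,Antip,0), (2,Comult,0),
              (1,Comult,0), (1,Integral,0)]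
      = ev 1 [(0,Mult,0), (0,Cointegral,2), (1,Mult,1), (0,Mult,3), (1,Swap,2), (0,Comult,3), (3,Antip,0), (2,Comult,0),
              (1,Comult,0), (1,Integral,0)]"
    by (rule interp_rewrite[OF interp_exchange[of Mult 0 Mult], of 2 _ _ 0 1]) simp_all
  also have "\<dots> = ev 1 [(0,Mult,0), (0,Mult,1), (0,Cointegral,3), (0,Mult,3), (1,Swap,2), (0,Comult,3), (3,Antip,0),
                             (2,Comult,0), (1,Comult,0), (1,Integral,0)]"
    by (rule interp_rewrite[OF interp_exchange[of Cointegral 0 Mult], of 1 _ _ 0 1]) simp_all
  also have "\<dots> = ev 1 [(0,Mult,0), (1,Mult,0), (0,Cointegral,3), (0,Mult,3), (1,Swap,2), (0,Comult,3), (3,Antip,0),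
                             (2,Comult,0), (1,Comult,0), (1,Integral,0)]"
    by (rule interp_rewrite[OF word_mult_assoc, of 0 _ _ 0 0]) simp_all
  also have "\<dots> = ev 1 [(0,Mult,0), (0,Cointegral,2), (2,Mult,0), (0,Mult,3), (1,Swap,2), (0,Comult,3), (3,Antip,0),
                             (2,Comult,0), (1,Comult,0), (1,Integral,0)]"
    by (rule interp_rewrite[OF interp_exchange[of Cointegral 1 Mult, symmetric], of 1 _ _ 0 0]) simp_all
  also have "\<dots> = ev 1 [(0,Mult,0), (0,Cointegral,2), (0,Mult,2), (3,Mult,0), (1,Swap,2), (0,Comult,3), (3,Antip,0),
                             (2,Comult,0), (1,Comult,0), (1,Integral,0)]"
    by (rule interp_rewrite[OF interp_exchange[of Mult 1 Mult, symmetric], of 2 _ _ 0 0]) simp_all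
  also have "\<dots> = ev 1 [(0,Mult,0), (0,Cointegral,2), (0,Mult,2), (1,Swap,1), (3,Mult,0), (0,Comult,3), (3,Antip,0),
                             (2,Comult,0), (1,Comult,0), (1,Integral,0)]"
    by (rule interp_rewrite[OF interp_exchange[of Swap 0 Mult, symmetric], of 3 _ _ 1 0]) simp_all
  also have "\<dots> = ev 1 [(0,Mult,0), (0,Cointegral,2), (0,Mult,2), (1,Swap,1), (0,Comult,2), (2,Mult,0), (3,Antip,0),
                             (2,Comult,0), (1,Comult,0), (1,Integral,0)]"
    by (rule interp_rewrite[OF interp_exchange[of Comult 1 Mult, symmetric], of 4 _ _ 0 0]) simp_all
  also have "\<dots> = ev 1 [(0,Mult,0), (0,Cointegral,2), (0,Mult,2), (1,Swap,1), (0,Comult,2), (2,Unit,0), (2,Counit,0),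
                             (1,Comult,0), (1,Integral,0)]"
    by (rule interp_rewrite[OF word_antipode_right, of 5 _ _ 2 0]) simp_all
  also have "\<dots> = ev 1 [(0,Mult,0), (0,Cointegral,2), (0,Mult,2), (1,Swap,1), (0,Comult,2), (2,Unit,0), (1,Integral,0)]"
    by (rule interp_rewrite[OF word_comult_counit_right, of 6 _ _ 1 0]) simp_all
  also have "\<dots> = ev 1 [(0,Mult,0), (0,Cointegral,2), (0,Mult,2), (1,Swap,1), (3,Unit,0), (0,Comult,1), (1,Integral,0)]"
    by (rule interp_rewrite[OF interp_exchange[of Comult 1 Unit], of 4 _ _ 0 0]) simp_all
  also have "\<dots> = ev 1 [(0,Mult,0), (0,Cointegral,2), (0,Mult,2), (3,Unit,0), (1,Swap,0), (0,Comult,1), (1,Integral,0)]"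
    by (rule interp_rewrite[OF interp_exchange[of Swap 0 Unit], of 3 _ _ 1 0]) simp_all
  also have "\<dots> = ev 1 [(0,Mult,0), (0,Cointegral,2), (2,Unit,0), (0,Mult,1), (1,Swap,0), (0,Comult,1), (1,Integral,0)]"
    by (rule interp_rewrite[OF interp_exchange[of Mult 1 Unit], of 2 _ _ 0 0]) simp_all
  also have "\<dots> = ev 1 [(0,Mult,0), (1,Unit,0), (0,Cointegral,1), (0,Mult,1), (1,Swap,0), (0,Comult,1), (1,Integral,0)]"
    by (rule interp_rewrite[OF interp_exchange[of Cointegral 1 Unit], of 1 _ _ 0 0]) simp_all
  also have "\<dots> = ev 1 [(0,Cointegral,1), (0,Mult,1), (1,Swap,0), (0,Comult,1), (1,Integral,0)]"
    by (rule interp_rewrite[OF word_mult_unit_right, of 0 _ _ 0 0]) simp_all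
  finally show ?thesis .
qed

(* \<lambda>(x \<Lambda>\<^sub>1) S(\<Lambda>\<^sub>2) = x *)
lemma cointegral_integral_antipode:
  "ev 1 [(0,Cointegral,1), (0,Mult,1), (2,Antip,0), (1,Comult,0), (1,Integral,0)] = ev 1 []"
  using cointegral_integral_antipode_expand cointegral_integral_antipode_contract
    cointegral_mult_comult_integral by simp

(* S(x) \<Lambda>\<^sub>1 \<otimes> \<Lambda>\<^sub>2 = S(x\<^sub>1) x\<^sub>2 \<Lambda>\<^sub>1 \<otimes> x\<^sub>3 \<Lambda>\<^sub>2 *)
lemma antipode_integral_expand:
  "ev 1 [(0,Mult,1), (0,Antip,2), (1,Comult,0), (1,Integral,0)]
   = ev 1 [(0,Mult,1), (0,Mult,2), (0,Antip,3), (3,Mult,0), (2,Swap,1), (3,Comult,0), (3,Integral,0), (0,Comult,1),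
           (0,Comult,0)]"
proof -
  have "ev 1 [(0,Mult,1), (0,Antip,2), (1,Comult,0), (1,Integral,0)]
      = ev 1 [(0,Mult,1), (0,Antip,2), (1,Comult,0), (1,Integral,0), (1,Counit,0), (0,Comult,0)]"
    by (rule interp_rewrite[OF word_comult_counit_right[symmetric], of 4 _ _ 0 0]) simp_all
  also have "\<dots> = ev 1 [(0,Mult,1), (0,Antip,2), (1,Comult,0), (1,Mult,0), (2,Integral,0), (0,Comult,0)]"
    by (rule interp_rewrite[OF word_integral[symmetric], of 3 _ _ 1 0]) simp_all
  also have "\<dots> = ev 1 [(0,Mult,1), (0,Antip,2), (1,Mult,1), (3,Mult,0), (2,Swap,1), (1,Comult,2), (2,Comult,0),
                             (2,Integral,0), (0,Comult,0)]"
    by (rule interp_rewrite[OF word_comult_mult, of 2 _ _ 1 0]) simp_all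
  also have "\<dots> = ev 1 [(0,Mult,1), (1,Mult,1), (0,Antip,3), (3,Mult,0), (2,Swap,1), (1,Comult,2), (2,Comult,0),
                             (2,Integral,0), (0,Comult,0)]"
    by (rule interp_rewrite[OF interp_exchange[of Antip 0 Mult], of 1 _ _ 0 1]) simp_all
  also have "\<dots> = ev 1 [(0,Mult,1), (0,Mult,2), (0,Antip,3), (3,Mult,0), (2,Swap,1), (1,Comult,2), (2,Comult,0),
                             (2,Integral,0), (0,Comult,0)]"
    by (rule interp_rewrite[OF word_mult_assoc[symmetric], of 0 _ _ 0 1]) simp_all
  also have "\<dots> = ev 1 [(0,Mult,1), (0,Mult,2), (0,Antip,3), (3,Mult,0), (2,Swap,1), (3,Comult,0), (1,Comult,1),
                             (2,Integral,0), (0,Comult,0)]"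
    by (rule interp_rewrite[OF interp_exchange[of Comult 0 Comult], of 5 _ _ 1 0]) simp_all
  also have "\<dots> = ev 1 [(0,Mult,1), (0,Mult,2), (0,Antip,3), (3,Mult,0), (2,Swap,1), (3,Comult,0), (3,Integral,0),
                             (1,Comult,0), (0,Comult,0)]"
    by (rule interp_rewrite[OF interp_exchange[of Comult 0 Integral], of 6 _ _ 1 0]) simp_all
  also have "\<dots> = ev 1 [(0,Mult,1), (0,Mult,2), (0,Antip,3), (3,Mult,0), (2,Swap,1), (3,Comult,0), (3,Integral,0),
                             (0,Comult,1), (0,Comult,0)]"
    by (rule interp_rewrite[OF word_comult_coassoc[symmetric], of 7 _ _ 0 0]) simp_all
  finally show ?thesis .
qed

(* S(x\<^sub>1) x\<^sub>2 \<Lambda>\<^sub>1 \<otimes> x\<^sub>3 \<Lambda>\<^sub>2 = \<Lambda>\<^sub>1 \<otimes> x \<Lambda>\<^sub>2 *)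
lemma antipode_integral_contract:
  "ev 1 [(0,Mult,1), (0,Mult,2), (0,Antip,3), (3,Mult,0), (2,Swap,1), (3,Comult,0), (3,Integral,0), (0,Comult,1), (0,Comult,0)]
   = ev 1 [(1,Mult,0), (0,Swap,1), (1,Comult,0), (1,Integral,0)]"
proof -
  have "ev 1 [(0,Mult,1), (0,Mult,2), (0,Antip,3), (3,Mult,0), (2,Swap,1), (3,Comult,0), (3,Integral,0), (0,Comult,1),
              (0,Comult,0)]
      = ev 1 [(0,Mult,1), (0,Mult,2), (3,Mult,0), (0,Antip,4), (2,Swap,1), (3,Comult,0), (3,Integral,0), (0,Comult,1),
              (0,Comult,0)]"
    by (rule interp_rewrite[OF interp_exchange[of Antip 2 Mult], of 2 _ _ 0 0]) simp_all
  also have "\<dots> = ev 1 [(0,Mult,1), (0,Mult,2), (3,Mult,0), (2,Swap,1), (0,Antip,4), (3,Comult,0), (3,Integral,0),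
                             (0,Comult,1), (0,Comult,0)]"
    by (rule interp_rewrite[OF interp_exchange[of Antip 1 Swap], of 3 _ _ 0 1]) simp_all
  also have "\<dots> = ev 1 [(0,Mult,1), (0,Mult,2), (3,Mult,0), (2,Swap,1), (3,Comult,0), (0,Antip,3), (3,Integral,0),
                             (0,Comult,1), (0,Comult,0)]"
    by (rule interp_rewrite[OF interp_exchange[of Antip 2 Comult], of 4 _ _ 0 0]) simp_all
  also have "\<dots> = ev 1 [(0,Mult,1), (0,Mult,2), (3,Mult,0), (2,Swap,1), (3,Comult,0), (3,Integral,0), (0,Antip,2),
                             (0,Comult,1), (0,Comult,0)]"
    by (rule interp_rewrite[OF interp_exchange[of Antip 2 Integral], of 5 _ _ 0 0]) simp_all
  also have "\<dots> = ev 1 [(0,Mult,1), (2,Mult,0), (0,Mult,3), (2,Swap,1), (3,Comult,0), (3,Integral,0), (0,Antip,2),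
                             (0,Comult,1), (0,Comult,0)]"
    by (rule interp_rewrite[OF interp_exchange[of Mult 1 Mult], of 1 _ _ 0 0]) simp_all
  also have "\<dots> = ev 1 [(0,Mult,1), (2,Mult,0), (1,Swap,1), (0,Mult,3), (3,Comult,0), (3,Integral,0), (0,Antip,2),
                             (0,Comult,1), (0,Comult,0)]"
    by (rule interp_rewrite[OF interp_exchange[of Mult 0 Swap], of 2 _ _ 0 1]) simp_all
  also have "\<dots> = ev 1 [(0,Mult,1), (2,Mult,0), (1,Swap,1), (2,Comult,0), (0,Mult,2), (3,Integral,0), (0,Antip,2),
                             (0,Comult,1), (0,Comult,0)]"
    by (rule interp_rewrite[OF interp_exchange[of Mult 1 Comult], of 3 _ _ 0 0]) simp_all
  also have "\<dots> = ev 1 [(0,Mult,1), (2,Mult,0), (1,Swap,1), (2,Comult,0), (2,Integral,0), (0,Mult,1), (0,Antip,2),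
                             (0,Comult,1), (0,Comult,0)]"
    by (rule interp_rewrite[OF interp_exchange[of Mult 1 Integral], of 4 _ _ 0 0]) simp_all
  also have "\<dots> = ev 1 [(0,Mult,1), (2,Mult,0), (1,Swap,1), (2,Comult,0), (2,Integral,0), (0,Unit,1), (0,Counit,1),
                             (0,Comult,0)]"
    by (rule interp_rewrite[OF word_antipode_left, of 5 _ _ 0 1]) simp_all
  also have "\<dots> = ev 1 [(0,Mult,1), (2,Mult,0), (1,Swap,1), (2,Comult,0), (2,Integral,0), (0,Unit,1)]"
    by (rule interp_rewrite[OF word_comult_counit_left, of 6 _ _ 0 0]) simp_all
  also have "\<dots> = ev 1 [(0,Mult,1), (2,Mult,0), (1,Swap,1), (2,Comult,0), (0,Unit,2), (1,Integral,0)]"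
    by (rule interp_rewrite[OF interp_exchange[of Unit 1 Integral, symmetric], of 4 _ _ 0 0]) simp_all
  also have "\<dots> = ev 1 [(0,Mult,1), (2,Mult,0), (1,Swap,1), (0,Unit,3), (1,Comult,0), (1,Integral,0)]"
    by (rule interp_rewrite[OF interp_exchange[of Unit 1 Comult, symmetric], of 3 _ _ 0 0]) simp_all
  also have "\<dots> = ev 1 [(0,Mult,1), (2,Mult,0), (0,Unit,3), (0,Swap,1), (1,Comult,0), (1,Integral,0)]"
    by (rule interp_rewrite[OF interp_exchange[of Unit 0 Swap, symmetric], of 2 _ _ 0 1]) simp_all
  also have "\<dots> = ev 1 [(0,Mult,1), (0,Unit,2), (1,Mult,0), (0,Swap,1), (1,Comult,0), (1,Integral,0)]"
    by (rule interp_rewrite[OF interp_exchange[of Unit 1 Mult, symmetric], of 1 _ _ 0 0]) simp_all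
  also have "\<dots> = ev 1 [(1,Mult,0), (0,Swap,1), (1,Comult,0), (1,Integral,0)]"
    by (rule interp_rewrite[OF word_mult_unit_left, of 0 _ _ 0 1]) simp_all
  finally show ?thesis .
qed

(* S(x) \<Lambda>\<^sub>1 \<otimes> \<Lambda>\<^sub>2 = \<Lambda>\<^sub>1 \<otimes> x \<Lambda>\<^sub>2 *)
lemma antipode_integral_transfer:
  "ev 1 [(0,Mult,1), (0,Antip,2), (1,Comult,0), (1,Integral,0)]
   = ev 1 [(1,Mult,0), (0,Swap,1), (1,Comult,0), (1,Integral,0)]"
  using antipode_integral_expand antipode_integral_contract by simp

(* x \<Lambda>\<^sub>1 \<otimes> \<Lambda>\<^sub>2 = \<Lambda>\<^sub>1 \<otimes> S\<^sup>-\<^sup>1(x) \<Lambda>\<^sub>2 *)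
lemma antipode_inv_integral_transfer:
  "ev 1 [(0,Mult,1), (1,Comult,0), (1,Integral,0)]
   = ev 1 [(1,Mult,0), (1,AntipInv,1), (0,Swap,1), (1,Comult,0), (1,Integral,0)]"
proof -
  have "ev 1 [(0,Mult,1), (1,Comult,0), (1,Integral,0)]
      = ev 1 [(0,Mult,1), (1,Comult,0), (1,Integral,0), (0,Antip,0), (0,AntipInv,0)]"
    by (rule interp_rewrite[OF word_antipode_antipode_inv[symmetric], of 3 _ _ 0 0]) simp_all
  also have "\<dots> = ev 1 [(0,Mult,1), (1,Comult,0), (0,Antip,1), (1,Integral,0), (0,AntipInv,0)]"
    by (rule interp_rewrite[OF interp_exchange[of Antip 0 Integral, symmetric], of 2 _ _ 0 0]) simp_all
  also have "\<dots> = ev 1 [(0,Mult,1), (0,Antip,2), (1,Comult,0), (1,Integral,0), (0,AntipInv,0)]"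
    by (rule interp_rewrite[OF interp_exchange[of Antip 0 Comult, symmetric], of 1 _ _ 0 0]) simp_all
  also have "\<dots> = ev 1 [(1,Mult,0), (0,Swap,1), (1,Comult,0), (1,Integral,0), (0,AntipInv,0)]"
    by (rule interp_rewrite[OF antipode_integral_transfer, of 0 _ _ 0 0]) simp_all
  also have "\<dots> = ev 1 [(1,Mult,0), (0,Swap,1), (1,Comult,0), (0,AntipInv,1), (1,Integral,0)]"
    by (rule interp_rewrite[OF interp_exchange[of AntipInv 0 Integral, symmetric], of 3 _ _ 0 0]) simp_all
  also have "\<dots> = ev 1 [(1,Mult,0), (0,Swap,1), (0,AntipInv,2), (1,Comult,0), (1,Integral,0)]"
    by (rule interp_rewrite[OF interp_exchange[of AntipInv 0 Comult, symmetric], of 2 _ _ 0 0]) simp_all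
  also have "\<dots> = ev 1 [(1,Mult,0), (1,AntipInv,1), (0,Swap,1), (1,Comult,0), (1,Integral,0)]"
    by (rule interp_rewrite[OF word_swap_natural_left[of AntipInv, simplified], of 1 _ _ 0 1]) simp_all
  finally show ?thesis .
qed

(* S(\<lambda>(x \<Lambda>\<^sub>1) \<Lambda>\<^sub>2) = x *)
lemma antipode_cointegral_integral:
  "ev 1 [(0,Antip,0), (0,Cointegral,1), (0,Mult,1), (1,Comult,0), (1,Integral,0)] = ev 1 []"
proof -
  have "ev 1 [(0,Antip,0), (0,Cointegral,1), (0,Mult,1), (1,Comult,0), (1,Integral,0)]
      = ev 1 [(0,Cointegral,1), (1,Antip,0), (0,Mult,1), (1,Comult,0), (1,Integral,0)]"
    by (rule interp_rewrite[OF interp_exchange[of Cointegral 0 Antip, symmetric], of 0 _ _ 0 0]) simp_all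
  also have "\<dots> = ev 1 [(0,Cointegral,1), (0,Mult,1), (2,Antip,0), (1,Comult,0), (1,Integral,0)]"
    by (rule interp_rewrite[OF interp_exchange[of Mult 0 Antip, symmetric], of 1 _ _ 0 0]) simp_all
  also have "\<dots> = ev 1 []"
    by (rule interp_rewrite[OF cointegral_integral_antipode, of 0 _ _ 0 0]) simp_all
  finally show ?thesis .
qed

(* S\<^sup>-\<^sup>1(x) = \<lambda>(x \<Lambda>\<^sub>1) \<Lambda>\<^sub>2 *)
lemma antipode_inv_via_integrals:
  "ev 1 [(0,AntipInv,0)] = ev 1 [(0,Cointegral,1), (0,Mult,1), (1,Comult,0), (1,Integral,0)]"
proof -
  have "ev 1 [(0,AntipInv,0)]
      = ev 1 [(0,AntipInv,0), (0,Antip,0), (0,Cointegral,1), (0,Mult,1), (1,Comult,0), (1,Integral,0)]"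
    by (rule interp_rewrite[OF antipode_cointegral_integral[symmetric], of 1 _ _ 0 0]) simp_all
  also have "\<dots> = ev 1 [(0,Cointegral,1), (0,Mult,1), (1,Comult,0), (1,Integral,0)]"
    by (rule interp_rewrite[OF word_antipode_inv_antipode, of 0 _ _ 0 0]) simp_all
  finally show ?thesis .
qed

(* S\<^sup>-\<^sup>1(x y) = S\<^sup>-\<^sup>1(y) S\<^sup>-\<^sup>1(x) *)
lemma antipode_inv_antimult:
  "ev 2 [(0,AntipInv,0), (0,Mult,0)] = ev 2 [(0,Mult,0), (0,AntipInv,1), (1,AntipInv,0), (0,Swap,0)]"
proof -
  have "ev 2 [(0,AntipInv,0), (0,Mult,0)]
      = ev 2 [(0,Cointegral,1), (0,Mult,1), (1,Comult,0), (1,Integral,0), (0,Mult,0)]"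
    by (rule interp_rewrite[OF antipode_inv_via_integrals, of 0 _ _ 0 0]) simp_all
  also have "\<dots> = ev 2 [(0,Cointegral,1), (0,Mult,1), (1,Comult,0), (0,Mult,1), (2,Integral,0)]"
    by (rule interp_rewrite[OF interp_exchange[of Mult 0 Integral, symmetric], of 3 _ _ 0 0]) simp_all
  also have "\<dots> = ev 2 [(0,Cointegral,1), (0,Mult,1), (0,Mult,2), (2,Comult,0), (2,Integral,0)]"
    by (rule interp_rewrite[OF interp_exchange[of Mult 0 Comult, symmetric], of 2 _ _ 0 0]) simp_all
  also have "\<dots> = ev 2 [(0,Cointegral,1), (0,Mult,1), (1,Mult,1), (2,Comult,0), (2,Integral,0)]"
    by (rule interp_rewrite[OF word_mult_assoc, of 1 _ _ 0 1]) simp_all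
  also have "\<dots> = ev 2 [(0,Cointegral,1), (0,Mult,1), (2,Mult,0), (2,AntipInv,1), (1,Swap,1), (2,Comult,0),
                             (2,Integral,0)]"
    by (rule interp_rewrite[OF antipode_inv_integral_transfer, of 2 _ _ 1 0]) simp_all
  also have "\<dots> = ev 2 [(0,Cointegral,1), (1,Mult,0), (0,Mult,2), (2,AntipInv,1), (1,Swap,1), (2,Comult,0),
                             (2,Integral,0)]"
    by (rule interp_rewrite[OF interp_exchange[of Mult 0 Mult], of 1 _ _ 0 0]) simp_all
  also have "\<dots> = ev 2 [(0,Mult,0), (0,Cointegral,2), (0,Mult,2), (2,AntipInv,1), (1,Swap,1), (2,Comult,0),
                             (2,Integral,0)]"
    by (rule interp_rewrite[OF interp_exchange[of Cointegral 0 Mult], of 0 _ _ 0 0]) simp_all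
  also have "\<dots> = ev 2 [(0,Mult,0), (0,Cointegral,2), (1,AntipInv,1), (0,Mult,2), (1,Swap,1), (2,Comult,0),
                             (2,Integral,0)]"
    by (rule interp_rewrite[OF interp_exchange[of Mult 0 AntipInv], of 2 _ _ 0 1]) simp_all
  also have "\<dots> = ev 2 [(0,Mult,0), (0,AntipInv,1), (0,Cointegral,2), (0,Mult,2), (1,Swap,1), (2,Comult,0),
                             (2,Integral,0)]"
    by (rule interp_rewrite[OF interp_exchange[of Cointegral 0 AntipInv], of 1 _ _ 0 1]) simp_all
  also have "\<dots> = ev 2 [(0,Mult,0), (0,AntipInv,1), (1,Cointegral,1), (1,Mult,1), (0,Swap,2), (2,Comult,0),
                             (2,Integral,0)]"
    by (rule interp_rewrite[OF word_swap_cointegral_mult, of 2 _ _ 0 1]) simp_all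
  also have "\<dots> = ev 2 [(0,Mult,0), (0,AntipInv,1), (1,Cointegral,1), (1,Mult,1), (2,Comult,0), (0,Swap,1),
                             (2,Integral,0)]"
    by (rule interp_rewrite[OF interp_exchange[of Swap 0 Comult], of 4 _ _ 0 0]) simp_all
  also have "\<dots> = ev 2 [(0,Mult,0), (0,AntipInv,1), (1,Cointegral,1), (1,Mult,1), (2,Comult,0), (2,Integral,0),
                             (0,Swap,0)]"
    by (rule interp_rewrite[OF interp_exchange[of Swap 0 Integral], of 5 _ _ 0 0]) simp_all
  also have "\<dots> = ev 2 [(0,Mult,0), (0,AntipInv,1), (1,AntipInv,0), (0,Swap,0)]"
    by (rule interp_rewrite[OF antipode_inv_via_integrals[symmetric], of 2 _ _ 1 0]) simp_all
  finally show ?thesis .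
qed

lemma antipode_inv_antimult_swap:
  "ev 2 [(0,Mult,0), (0,AntipInv,1), (1,AntipInv,0)] = ev 2 [(0,AntipInv,0), (0,Mult,0), (0,Swap,0)]"
proof -
  have "ev 2 [(0,Mult,0), (0,AntipInv,1), (1,AntipInv,0)]
      = ev 2 [(0,Mult,0), (0,AntipInv,1), (1,AntipInv,0), (0,Swap,0), (0,Swap,0)]"
    by (rule interp_rewrite[OF word_swap_swap[symmetric], of 3 _ _ 0 0]) simp_all
  also have "\<dots> = ev 2 [(0,AntipInv,0), (0,Mult,0), (0,Swap,0)]"
    by (rule interp_rewrite[OF antipode_inv_antimult[symmetric], of 0 _ _ 0 0]) simp_all
  finally show ?thesis .
qed

(* S(x y) = S(y) S(x) *)
lemma antipode_antimult:
  "ev 2 [(0,Antip,0), (0,Mult,0)] = ev 2 [(0,Mult,0), (0,Antip,1), (1,Antip,0), (0,Swap,0)]"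
proof -
  have "ev 2 [(0,Antip,0), (0,Mult,0)]
      = ev 2 [(0,Antip,0), (0,Mult,0), (0,AntipInv,1), (0,Antip,1)]"
    by (rule interp_rewrite[OF word_antipode_inv_antipode[symmetric], of 2 _ _ 0 1]) simp_all
  also have "\<dots> = ev 2 [(0,Antip,0), (0,Mult,0), (0,AntipInv,1), (0,Antip,1), (1,AntipInv,0), (1,Antip,0)]"
    by (rule interp_rewrite[OF word_antipode_inv_antipode[symmetric], of 4 _ _ 1 0]) simp_all
  also have "\<dots> = ev 2 [(0,Antip,0), (0,Mult,0), (0,AntipInv,1), (1,AntipInv,0), (0,Antip,1), (1,Antip,0)]"
    by (rule interp_rewrite[OF interp_exchange[of Antip 0 AntipInv], of 3 _ _ 0 0]) simp_all
  also have "\<dots> = ev 2 [(0,Antip,0), (0,AntipInv,0), (0,Mult,0), (0,Swap,0), (0,Antip,1), (1,Antip,0)]"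
    by (rule interp_rewrite[OF antipode_inv_antimult_swap, of 1 _ _ 0 0]) simp_all
  also have "\<dots> = ev 2 [(0,Mult,0), (0,Swap,0), (0,Antip,1), (1,Antip,0)]"
    by (rule interp_rewrite[OF word_antipode_antipode_inv, of 0 _ _ 0 0]) simp_all
  also have "\<dots> = ev 2 [(0,Mult,0), (1,Antip,0), (0,Swap,0), (1,Antip,0)]"
    by (rule interp_rewrite[OF word_swap_natural_left[of Antip, simplified], of 1 _ _ 0 0]) simp_all
  also have "\<dots> = ev 2 [(0,Mult,0), (1,Antip,0), (0,Antip,1), (0,Swap,0)]"
    by (rule interp_rewrite[OF word_swap_natural_right[of Antip, simplified], of 2 _ _ 0 0]) simp_all
  also have "\<dots> = ev 2 [(0,Mult,0), (0,Antip,1), (1,Antip,0), (0,Swap,0)]"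
    by (rule interp_rewrite[OF interp_exchange[of Antip 0 Antip, symmetric], of 1 _ _ 0 0]) simp_all
  finally show ?thesis .
qed

lemma antipode_antimult_swap:
  "ev 2 [(0,Mult,0), (0,Antip,1), (1,Antip,0)] = ev 2 [(0,Antip,0), (0,Mult,0), (0,Swap,0)]"
proof -
  have "ev 2 [(0,Mult,0), (0,Antip,1), (1,Antip,0)]
      = ev 2 [(0,Mult,0), (0,Antip,1), (1,Antip,0), (0,Swap,0), (0,Swap,0)]"
    by (rule interp_rewrite[OF word_swap_swap[symmetric], of 3 _ _ 0 0]) simp_all
  also have "\<dots> = ev 2 [(0,Antip,0), (0,Mult,0), (0,Swap,0)]"
    by (rule interp_rewrite[OF antipode_antimult[symmetric], of 0 _ _ 0 0]) simp_all
  finally show ?thesis .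
qed

lemma antipode_unit:
  "ev 0 [(0,Unit,0)] = ev 0 [(0,Antip,0), (0,Unit,0)]"
proof -
  have "ev 0 [(0,Unit,0)] = ev 0 [(0,Unit,0), (0,Counit,0), (0,Unit,0)]"
    by (rule interp_rewrite[OF word_counit_unit[symmetric], of 1 _ _ 0 0]) simp_all
  also have "\<dots> = ev 0 [(0,Mult,0), (0,Antip,1), (0,Comult,0), (0,Unit,0)]"
    by (rule interp_rewrite[OF word_antipode_left[symmetric], of 0 _ _ 0 0]) simp_all
  also have "\<dots> = ev 0 [(0,Mult,0), (0,Antip,1), (0,Unit,1), (0,Unit,0)]"
    by (rule interp_rewrite[OF word_comult_unit, of 2 _ _ 0 0]) simp_all
  also have "\<dots> = ev 0 [(0,Mult,0), (0,Antip,1), (1,Unit,0), (0,Unit,0)]"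
    by (rule interp_rewrite[OF interp_exchange[of Unit 0 Unit], of 2 _ _ 0 0]) simp_all
  also have "\<dots> = ev 0 [(0,Mult,0), (1,Unit,0), (0,Antip,0), (0,Unit,0)]"
    by (rule interp_rewrite[OF interp_exchange[of Antip 0 Unit], of 1 _ _ 0 0]) simp_all
  also have "\<dots> = ev 0 [(0,Antip,0), (0,Unit,0)]"
    by (rule interp_rewrite[OF word_mult_unit_right, of 0 _ _ 0 0]) simp_all
  finally show ?thesis .
qed

lemma antipode_inv_unit:
  "ev 0 [(0,AntipInv,0), (0,Unit,0)] = ev 0 [(0,Unit,0)]"
proof -
  have "ev 0 [(0,AntipInv,0), (0,Unit,0)] = ev 0 [(0,AntipInv,0), (0,Antip,0), (0,Unit,0)]"
    by (rule interp_rewrite[OF antipode_unit, of 1 _ _ 0 0]) simp_all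
  also have "\<dots> = ev 0 [(0,Unit,0)]"
    by (rule interp_rewrite[OF word_antipode_inv_antipode, of 0 _ _ 0 0]) simp_all
  finally show ?thesis .
qed

lemma antipode_antimult_Cmp: "Cmp C S mu = Cmp C mu (Cmp C (TnM C S idA) (Cmp C (TnM C idA S) sw))"
  using antipode_antimult by (simp add: word_simps)

end

text \<open>Reversing both composition and tensor product turns a strict symmetric monoidal category
  into another one with the same symmetry, and exchanges the roles of \<open>(m, u, \<Lambda>)\<close> and
  \<open>(\<Delta>, \<epsilon>, \<lambda>)\<close> of an integral Hopf algebra. This duality turns anti-multiplicativity of the
  antipode into anti-comultiplicativity.\<close>

definition op_rev :: "('o,'m) smc \<Rightarrow> ('o,'m) smc" where
  "op_rev C = \<lparr>Ob = Ob C, Ar = Ar C, Dom = Cod C, Cod = Dom C, Idm = Idm C,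
     Cmp = (\<lambda>g f. Cmp C f g), TnO = (\<lambda>A B. TnO C B A), TnM = (\<lambda>f g. TnM C g f),
     Unt = Unt C, Sy = Sy C\<rparr>"

definition dual_hopf :: "('o,'m) int_hopf \<Rightarrow> ('o,'m) int_hopf" where
  "dual_hopf H = H\<lparr>hm := hD H, hu := he H, hD := hm H, he := hu H, hL := hl H, hl := hL H\<rparr>"

lemma op_rev_simps[simp]:
  "Ob (op_rev C) = Ob C" "Ar (op_rev C) = Ar C" "Dom (op_rev C) = Cod C" "Cod (op_rev C) = Dom C"
  "Idm (op_rev C) = Idm C" "Cmp (op_rev C) g f = Cmp C f g" "TnO (op_rev C) A B = TnO C B A"
  "TnM (op_rev C) f g = TnM C g f" "Unt (op_rev C) = Unt C" "Sy (op_rev C) = Sy C"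
  by (simp_all add: op_rev_def)

lemma hom_op_rev[simp]: "hom (op_rev C) f A B = hom C f B A"
  by (auto simp: hom_def)

lemma dual_hopf_simps[simp]:
  "hob (dual_hopf H) = hob H" "hm (dual_hopf H) = hD H" "hu (dual_hopf H) = he H"
  "hD (dual_hopf H) = hm H" "he (dual_hopf H) = hu H" "hS (dual_hopf H) = hS H"
  "hSi (dual_hopf H) = hSi H" "hL (dual_hopf H) = hl H" "hl (dual_hopf H) = hL H"
  by (simp_all add: dual_hopf_def)

lemma (in strict_smc) strict_smc_op_rev: "strict_symmetric_monoidal_cat (op_rev C)"
  unfolding strict_symmetric_monoidal_cat_def
  by (intro conjI allI impI ballI)
    (simp_all add: Idm_hom Cmp_hom Cmp_assoc_hom Cmp_Idm_hom TnM_hom TnM_Idm TnM_Cmp_hom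
      TnM_assoc Sy_hom Sy_natural Sy_Sy Sy_TnO_right Sy_TnO_left)

lemma (in int_hopf_alg) int_hopf_dual: "is_int_hopf (op_rev C) (dual_hopf H)"
  unfolding is_int_hopf_def Let_def is_algebra_def is_coalgebra_def
  using structure_hom antipode_left antipode_right
  by (simp add: mult_assoc mult_unit_left mult_unit_right comult_coassoc comult_counit_left
      comult_counit_right comult_mult comult_unit counit_mult counit_unit antipode_antipode_inv
      antipode_inv_antipode integral cointegral cointegral_integral Cmp_assoc TnM_assoc)

lemma (in int_hopf_alg) antipode_anticomult_Cmp:
  "Cmp C delta S = Cmp C (Cmp C (Cmp C sw (TnM C S idA)) (TnM C idA S)) delta"
proof -
  interpret dual: int_hopf_alg "op_rev C" "dual_hopf H"
    by unfold_locales (simp_all add: strict_smc_op_rev int_hopf_dual)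
  show ?thesis using dual.antipode_antimult_Cmp by simp
qed

section \<open>The Frobenius structure\<close>

context int_hopf_alg
begin

(* \<Delta>(S x) = S(x\<^sub>2) \<otimes> S(x\<^sub>1) *)
lemma antipode_anticomult:
  "ev 1 [(0,Comult,0), (0,Antip,0)] = ev 1 [(0,Swap,0), (0,Antip,1), (1,Antip,0), (0,Comult,0)]"
  using antipode_anticomult_Cmp by (simp add: word_simps Cmp_assoc)

lemma antipode_anticomult_swap:
  "ev 1 [(0,Antip,1), (1,Antip,0), (0,Comult,0)] = ev 1 [(0,Swap,0), (0,Comult,0), (0,Antip,0)]"
proof -
  have "ev 1 [(0,Antip,1), (1,Antip,0), (0,Comult,0)]
      = ev 1 [(0,Swap,0), (0,Swap,0), (0,Antip,1), (1,Antip,0), (0,Comult,0)]"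
    by (rule interp_rewrite[OF word_swap_swap[symmetric], of 0 _ _ 0 0]) simp_all
  also have "\<dots> = ev 1 [(0,Swap,0), (0,Comult,0), (0,Antip,0)]"
    by (rule interp_rewrite[OF antipode_anticomult[symmetric], of 1 _ _ 0 0]) simp_all
  finally show ?thesis .
qed

(* x\<^sub>1 \<lambda>(S x\<^sub>2) = \<lambda>(S x) 1 *)
lemma cointegral_antipode_comult:
  "ev 1 [(1,Cointegral,0), (1,Antip,0), (0,Comult,0)] = ev 1 [(0,Unit,0), (0,Cointegral,0), (0,Antip,0)]"
proof -
  have "ev 1 [(1,Cointegral,0), (1,Antip,0), (0,Comult,0)]
      = ev 1 [(0,AntipInv,0), (0,Antip,0), (1,Cointegral,0), (1,Antip,0), (0,Comult,0)]"
    by (rule interp_rewrite[OF word_antipode_inv_antipode[symmetric], of 0 _ _ 0 0]) simp_all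
  also have "\<dots> = ev 1 [(0,AntipInv,0), (1,Cointegral,0), (0,Antip,1), (1,Antip,0), (0,Comult,0)]"
    by (rule interp_rewrite[OF interp_exchange[of Antip 0 Cointegral], of 1 _ _ 0 0]) simp_all
  also have "\<dots> = ev 1 [(0,AntipInv,0), (1,Cointegral,0), (0,Swap,0), (0,Comult,0), (0,Antip,0)]"
    by (rule interp_rewrite[OF antipode_anticomult_swap, of 2 _ _ 0 0]) simp_all
  also have "\<dots> = ev 1 [(0,AntipInv,0), (0,Cointegral,1), (0,Comult,0), (0,Antip,0)]"
    by (rule interp_rewrite[OF word_swap_cointegral[symmetric], of 1 _ _ 0 0]) simp_all
  also have "\<dots> = ev 1 [(0,AntipInv,0), (0,Unit,0), (0,Cointegral,0), (0,Antip,0)]"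
    by (rule interp_rewrite[OF word_cointegral, of 1 _ _ 0 0]) simp_all
  also have "\<dots> = ev 1 [(0,Unit,0), (0,Cointegral,0), (0,Antip,0)]"
    by (rule interp_rewrite[OF antipode_inv_unit, of 0 _ _ 0 0]) simp_all
  finally show ?thesis .
qed

(* \<Lambda>\<^sub>1 \<otimes> S(\<Lambda>\<^sub>2) x = x \<Lambda>\<^sub>1 \<otimes> S(\<Lambda>\<^sub>2) *)
lemma integral_mult_transfer:
  "ev 1 [(1,Mult,0), (1,Antip,1), (0,Comult,1), (0,Integral,1)]
   = ev 1 [(0,Mult,1), (2,Antip,0), (1,Comult,0), (1,Integral,0)]"
proof -
  have "ev 1 [(1,Mult,0), (1,Antip,1), (0,Comult,1), (0,Integral,1)]
      = ev 1 [(1,Mult,0), (1,Antip,1), (2,Antip,0), (2,AntipInv,0), (0,Comult,1), (0,Integral,1)]"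
    by (rule interp_rewrite[OF word_antipode_antipode_inv[symmetric], of 2 _ _ 2 0]) simp_all
  also have "\<dots> = ev 1 [(1,Antip,0), (1,Mult,0), (1,Swap,0), (2,AntipInv,0), (0,Comult,1), (0,Integral,1)]"
    by (rule interp_rewrite[OF antipode_antimult_swap, of 0 _ _ 1 0]) simp_all
  also have "\<dots> = ev 1 [(1,Antip,0), (1,Mult,0), (1,Swap,0), (2,AntipInv,0), (0,Comult,1), (0,Swap,0), (1,Integral,0)]"
    by (rule interp_rewrite[OF word_swap_integral[symmetric], of 5 _ _ 0 0]) simp_all
  also have "\<dots> = ev 1 [(1,Antip,0), (1,Mult,0), (1,Swap,0), (0,Comult,1), (1,AntipInv,0), (0,Swap,0), (1,Integral,0)]"
    by (rule interp_rewrite[OF interp_exchange[of Comult 0 AntipInv, symmetric], of 3 _ _ 0 0]) simp_all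
  also have "\<dots> = ev 1 [(1,Antip,0), (1,Mult,0), (1,Swap,0), (0,Comult,1), (0,Swap,0), (0,AntipInv,1), (1,Integral,0)]"
    by (rule interp_rewrite[OF word_swap_natural_left[of AntipInv, simplified, symmetric], of 4 _ _ 0 0]) simp_all
  also have "\<dots> = ev 1 [(1,Antip,0), (1,Mult,0), (1,Swap,0), (1,Swap,0), (0,Swap,1), (1,Comult,0), (0,AntipInv,1),
                             (1,Integral,0)]"
    by (rule interp_rewrite[OF word_swap_comult[symmetric], of 3 _ _ 0 0]) simp_all
  also have "\<dots> = ev 1 [(1,Antip,0), (1,Mult,0), (0,Swap,1), (1,Comult,0), (0,AntipInv,1), (1,Integral,0)]"
    by (rule interp_rewrite[OF word_swap_swap, of 2 _ _ 1 0]) simp_all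
  also have "\<dots> = ev 1 [(1,Antip,0), (1,Mult,0), (0,Swap,1), (0,AntipInv,2), (1,Comult,0), (1,Integral,0)]"
    by (rule interp_rewrite[OF interp_exchange[of AntipInv 0 Comult, symmetric], of 3 _ _ 0 0]) simp_all
  also have "\<dots> = ev 1 [(1,Antip,0), (1,Mult,0), (1,AntipInv,1), (0,Swap,1), (1,Comult,0), (1,Integral,0)]"
    by (rule interp_rewrite[OF word_swap_natural_left[of AntipInv, simplified], of 2 _ _ 0 1]) simp_all
  also have "\<dots> = ev 1 [(1,Antip,0), (0,Mult,1), (1,Comult,0), (1,Integral,0)]"
    by (rule interp_rewrite[OF antipode_inv_integral_transfer[symmetric], of 1 _ _ 0 0]) simp_all
  also have "\<dots> = ev 1 [(0,Mult,1), (2,Antip,0), (1,Comult,0), (1,Integral,0)]"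
    by (rule interp_rewrite[OF interp_exchange[of Mult 0 Antip, symmetric], of 0 _ _ 0 0]) simp_all
  finally show ?thesis .
qed

(* F(x) = \<Lambda>\<^sub>1 \<otimes> S(\<Lambda>\<^sub>2) x *)
lemma frob_comult_alt:
  "ev 1 [(0,Frob,0)] = ev 1 [(1,Mult,0), (1,Antip,1), (0,Comult,1), (0,Integral,1)]"
proof -
  have "ev 1 [(0,Frob,0)] = ev 1 [(0,Mult,1), (2,Antip,0), (1,Comult,0), (1,Integral,0)]"
    by (rule interp_rewrite[OF word_frob_comult, of 0 _ _ 0 0]) simp_all
  also have "\<dots> = ev 1 [(1,Mult,0), (1,Antip,1), (0,Comult,1), (0,Integral,1)]"
    by (rule interp_rewrite[OF integral_mult_transfer[symmetric], of 0 _ _ 0 0]) simp_all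
  finally show ?thesis .
qed

lemma frob_relation_left:
  "ev 2 [(0,Mult,1), (1,Frob,0)] = ev 2 [(0,Frob,0), (0,Mult,0)]"
proof -
  have "ev 2 [(0,Mult,1), (1,Frob,0)]
      = ev 2 [(0,Mult,1), (1,Mult,1), (3,Antip,0), (2,Comult,0), (2,Integral,0)]"
    by (rule interp_rewrite[OF word_frob_comult, of 1 _ _ 1 0]) simp_all
  also have "\<dots> = ev 2 [(0,Mult,1), (0,Mult,2), (3,Antip,0), (2,Comult,0), (2,Integral,0)]"
    by (rule interp_rewrite[OF word_mult_assoc[symmetric], of 0 _ _ 0 1]) simp_all
  also have "\<dots> = ev 2 [(0,Mult,1), (2,Antip,0), (0,Mult,2), (2,Comult,0), (2,Integral,0)]"
    by (rule interp_rewrite[OF interp_exchange[of Mult 1 Antip], of 1 _ _ 0 0]) simp_all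
  also have "\<dots> = ev 2 [(0,Mult,1), (2,Antip,0), (1,Comult,0), (0,Mult,1), (2,Integral,0)]"
    by (rule interp_rewrite[OF interp_exchange[of Mult 0 Comult], of 2 _ _ 0 0]) simp_all
  also have "\<dots> = ev 2 [(0,Mult,1), (2,Antip,0), (1,Comult,0), (1,Integral,0), (0,Mult,0)]"
    by (rule interp_rewrite[OF interp_exchange[of Mult 0 Integral], of 3 _ _ 0 0]) simp_all
  also have "\<dots> = ev 2 [(0,Frob,0), (0,Mult,0)]"
    by (rule interp_rewrite[OF word_frob_comult[symmetric], of 0 _ _ 0 0]) simp_all
  finally show ?thesis .
qed

lemma frob_relation_right:
  "ev 2 [(1,Mult,0), (0,Frob,1)] = ev 2 [(0,Frob,0), (0,Mult,0)]"
proof -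
  have "ev 2 [(1,Mult,0), (0,Frob,1)]
      = ev 2 [(1,Mult,0), (1,Mult,1), (1,Antip,2), (0,Comult,2), (0,Integral,2)]"
    by (rule interp_rewrite[OF frob_comult_alt, of 1 _ _ 0 1]) simp_all
  also have "\<dots> = ev 2 [(1,Mult,0), (2,Mult,0), (1,Antip,2), (0,Comult,2), (0,Integral,2)]"
    by (rule interp_rewrite[OF word_mult_assoc, of 0 _ _ 1 0]) simp_all
  also have "\<dots> = ev 2 [(1,Mult,0), (1,Antip,1), (2,Mult,0), (0,Comult,2), (0,Integral,2)]"
    by (rule interp_rewrite[OF interp_exchange[of Antip 0 Mult, symmetric], of 1 _ _ 1 0]) simp_all
  also have "\<dots> = ev 2 [(1,Mult,0), (1,Antip,1), (0,Comult,1), (1,Mult,0), (0,Integral,2)]"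
    by (rule interp_rewrite[OF interp_exchange[of Comult 0 Mult, symmetric], of 2 _ _ 0 0]) simp_all
  also have "\<dots> = ev 2 [(1,Mult,0), (1,Antip,1), (0,Comult,1), (0,Integral,1), (0,Mult,0)]"
    by (rule interp_rewrite[OF interp_exchange[of Integral 0 Mult, symmetric], of 3 _ _ 0 0]) simp_all
  also have "\<dots> = ev 2 [(0,Frob,0), (0,Mult,0)]"
    by (rule interp_rewrite[OF frob_comult_alt[symmetric], of 0 _ _ 0 0]) simp_all
  finally show ?thesis .
qed

lemma frob_coassoc: "ev 1 [(0,Frob,1), (0,Frob,0)] = ev 1 [(1,Frob,0), (0,Frob,0)]"
proof -
  let ?w = "ev 1 [(1,Mult,1), (0,Frob,2), (1,Frob,0), (0,Unit,1)]"
  have "ev 1 [(0,Frob,1), (0,Frob,0)] = ?w"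
  proof -
    have "ev 1 [(0,Frob,1), (0,Frob,0)] = ev 1 [(0,Frob,1), (0,Frob,0), (0,Mult,0), (0,Unit,1)]"
      by (rule interp_rewrite[OF word_mult_unit_left[symmetric], of 2 _ _ 0 0]) simp_all
    also have "\<dots> = ev 1 [(0,Frob,1), (0,Mult,1), (1,Frob,0), (0,Unit,1)]"
      by (rule interp_rewrite[OF frob_relation_left[symmetric], of 1 _ _ 0 0]) simp_all
    also have "\<dots> = ev 1 [(1,Mult,1), (0,Frob,2), (1,Frob,0), (0,Unit,1)]"
      by (rule interp_rewrite[OF frob_relation_right[symmetric], of 0 _ _ 0 1]) simp_all
    finally show ?thesis .
  qed
  moreover have "ev 1 [(1,Frob,0), (0,Frob,0)] = ?w"
  proof -
    have "ev 1 [(1,Frob,0), (0,Frob,0)] = ev 1 [(1,Frob,0), (0,Frob,0), (0,Mult,0), (0,Unit,1)]"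
      by (rule interp_rewrite[OF word_mult_unit_left[symmetric], of 2 _ _ 0 0]) simp_all
    also have "\<dots> = ev 1 [(1,Frob,0), (1,Mult,0), (0,Frob,1), (0,Unit,1)]"
      by (rule interp_rewrite[OF frob_relation_right[symmetric], of 1 _ _ 0 0]) simp_all
    also have "\<dots> = ev 1 [(1,Mult,1), (2,Frob,0), (0,Frob,1), (0,Unit,1)]"
      by (rule interp_rewrite[OF frob_relation_left[symmetric], of 0 _ _ 1 0]) simp_all
    also have "\<dots> = ev 1 [(1,Mult,1), (0,Frob,2), (1,Frob,0), (0,Unit,1)]"
      by (rule interp_rewrite[OF interp_exchange[of Frob 0 Frob, symmetric], of 1 _ _ 0 0]) simp_all
    finally show ?thesis .
  qed
  ultimately show ?thesis by simp
qed

lemma frob_counit_left: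
  "ev 1 [(0,Cointegral,1), (0,Frob,0)] = ev 1 []"
proof -
  have "ev 1 [(0,Cointegral,1), (0,Frob,0)]
      = ev 1 [(0,Cointegral,1), (0,Mult,1), (2,Antip,0), (1,Comult,0), (1,Integral,0)]"
    by (rule interp_rewrite[OF word_frob_comult, of 1 _ _ 0 0]) simp_all
  also have "\<dots> = ev 1 []"
    by (rule interp_rewrite[OF cointegral_integral_antipode, of 0 _ _ 0 0]) simp_all
  finally show ?thesis .
qed

(* \<lambda>(x) = \<lambda>(x) \<lambda>(S \<Lambda>) *)
lemma cointegral_eq_scaled:
  "ev 1 [(0,Cointegral,0)] = ev 1 [(0,Cointegral,0), (1,Cointegral,0), (1,Antip,0), (1,Integral,0)]"
proof -
  have "ev 1 [(0,Cointegral,0)] = ev 1 [(0,Cointegral,0), (0,Cointegral,1), (0,Frob,0)]"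
    by (rule interp_rewrite[OF frob_counit_left[symmetric], of 1 _ _ 0 0]) simp_all
  also have "\<dots> = ev 1 [(0,Cointegral,0), (1,Cointegral,0), (0,Frob,0)]"
    by (rule interp_rewrite[OF interp_exchange[of Cointegral 0 Cointegral, symmetric], of 0 _ _ 0 0]) simp_all
  also have "\<dots> = ev 1 [(0,Cointegral,0), (1,Cointegral,0), (0,Mult,1), (2,Antip,0), (1,Comult,0), (1,Integral,0)]"
    by (rule interp_rewrite[OF word_frob_comult, of 2 _ _ 0 0]) simp_all
  also have "\<dots> = ev 1 [(0,Cointegral,0), (0,Mult,0), (2,Cointegral,0), (2,Antip,0), (1,Comult,0), (1,Integral,0)]"
    by (rule interp_rewrite[OF interp_exchange[of Mult 0 Cointegral, symmetric], of 1 _ _ 0 0]) simp_all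
  also have "\<dots> = ev 1 [(0,Cointegral,0), (0,Mult,0), (1,Unit,0), (1,Cointegral,0), (1,Antip,0), (1,Integral,0)]"
    by (rule interp_rewrite[OF cointegral_antipode_comult, of 2 _ _ 1 0]) simp_all
  also have "\<dots> = ev 1 [(0,Cointegral,0), (1,Cointegral,0), (1,Antip,0), (1,Integral,0)]"
    by (rule interp_rewrite[OF word_mult_unit_right, of 1 _ _ 0 0]) simp_all
  finally show ?thesis .
qed

(* \<lambda>(S \<Lambda>) = 1, by evaluating \<lambda>(\<Lambda>) \<lambda>(S \<Lambda>) in two ways *)
lemma cointegral_antipode_integral: "ev 0 [(0,Cointegral,0), (0,Antip,0), (0,Integral,0)] = ev 0 []"
proof -
  let ?w = "ev 0 [(0,Cointegral,0), (1,Cointegral,0), (1,Antip,0), (1,Integral,0), (0,Integral,0)]"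
  have "?w = ev 0 [(0,Cointegral,0), (0,Antip,0), (0,Integral,0)]"
  proof -
    have "?w = ev 0 [(0,Cointegral,0), (1,Cointegral,0), (1,Antip,0), (0,Integral,1), (0,Integral,0)]"
      by (rule interp_rewrite[OF interp_exchange[of Integral 0 Integral, symmetric], of 3 _ _ 0 0]) simp_all
    also have "\<dots> = ev 0 [(0,Cointegral,0), (1,Cointegral,0), (0,Integral,1), (0,Antip,0), (0,Integral,0)]"
      by (rule interp_rewrite[OF interp_exchange[of Integral 0 Antip, symmetric], of 2 _ _ 0 0]) simp_all
    also have "\<dots> = ev 0 [(0,Cointegral,0), (0,Integral,0), (0,Cointegral,0), (0,Antip,0), (0,Integral,0)]"
      by (rule interp_rewrite[OF interp_exchange[of Integral 0 Cointegral, symmetric], of 1 _ _ 0 0]) simp_all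
    also have "\<dots> = ev 0 [(0,Cointegral,0), (0,Antip,0), (0,Integral,0)]"
      by (rule interp_rewrite[OF word_cointegral_integral, of 0 _ _ 0 0]) simp_all
    finally show ?thesis .
  qed
  moreover have "?w = ev 0 []"
  proof -
    have "?w = ev 0 [(0,Cointegral,0), (0,Integral,0)]"
      by (rule interp_rewrite[OF cointegral_eq_scaled[symmetric], of 0 _ _ 0 0]) simp_all
    also have "\<dots> = ev 0 []"
      by (rule interp_rewrite[OF word_cointegral_integral, of 0 _ _ 0 0]) simp_all
    finally show ?thesis .
  qed
  ultimately show ?thesis by simp
qed

lemma frob_counit_right:
  "ev 1 [(1,Cointegral,0), (0,Frob,0)] = ev 1 []"
proof -
  have "ev 1 [(1,Cointegral,0), (0,Frob,0)]
      = ev 1 [(1,Cointegral,0), (0,Mult,1), (2,Antip,0), (1,Comult,0), (1,Integral,0)]"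
    by (rule interp_rewrite[OF word_frob_comult, of 1 _ _ 0 0]) simp_all
  also have "\<dots> = ev 1 [(0,Mult,0), (2,Cointegral,0), (2,Antip,0), (1,Comult,0), (1,Integral,0)]"
    by (rule interp_rewrite[OF interp_exchange[of Mult 0 Cointegral, symmetric], of 0 _ _ 0 0]) simp_all
  also have "\<dots> = ev 1 [(0,Mult,0), (1,Unit,0), (1,Cointegral,0), (1,Antip,0), (1,Integral,0)]"
    by (rule interp_rewrite[OF cointegral_antipode_comult, of 1 _ _ 1 0]) simp_all
  also have "\<dots> = ev 1 [(1,Cointegral,0), (1,Antip,0), (1,Integral,0)]"
    by (rule interp_rewrite[OF word_mult_unit_right, of 0 _ _ 0 0]) simp_all
  also have "\<dots> = ev 1 []"
    by (rule interp_rewrite[OF cointegral_antipode_integral, of 0 _ _ 1 0]) simp_all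
  finally show ?thesis .
qed

end

lemma (in int_hopf_alg) frobenius_algebra:
  "is_frobenius_algebra C A mu eta (frob_comult C H) lam"
proof -
  have "is_algebra C A mu eta"
    using int_hopf unfolding is_int_hopf_def Let_def by blast
  moreover have "is_coalgebra C A (frob_comult C H) lam"
    unfolding is_coalgebra_def
    using frob_coassoc frob_counit_left frob_counit_right by (simp add: word_simps hom_def)
  ultimately show ?thesis
    unfolding is_frobenius_algebra_def using frob_relation_left frob_relation_right by (simp add: word_simps)
qed

definition convolution :: "('o,'m) smc \<Rightarrow> ('o,'m) int_hopf \<Rightarrow> ('o,'m) int_hopf \<Rightarrow> 'm \<Rightarrow> 'm \<Rightarrow> 'm" where
  "convolution C H K g h = Cmp C (hm K) (Cmp C (TnM C g h) (hD H))"

locale int_hopf_pair = strict_smc C + H: int_hopf_alg C H + K: int_hopf_alg C K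
  for C :: "('o,'m) smc" and H K
begin

abbreviation "conv \<equiv> convolution C H K"
abbreviation "conv_unit \<equiv> Cmp C (hu K) (he H)"

lemma convolution_unit_right:
  assumes g: "hom C g (hob H) (hob K)"
  shows "conv g conv_unit = g"
proof -
  have g': "g \<in> Ar C" "Dom C g = hob H" "Cod C g = hob K" using g by (auto simp: hom_def)
  have "TnM C g conv_unit = Cmp C (TnM C (Idm C (hob K)) (hu K)) (TnM C g (he H))"
    using g' by (simp add: interchange)
  moreover have "TnM C g (he H) = Cmp C g (TnM C (Idm C (hob H)) (he H))"
    using interchange[of "Idm C (hob H)" g "he H" "Idm C (Unt C)"] g' by simp
  ultimately have "conv g conv_unit
      = Cmp C (Cmp C (hm K) (TnM C (Idm C (hob K)) (hu K)))
          (Cmp C g (Cmp C (TnM C (Idm C (hob H)) (he H)) (hD H)))"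
    unfolding convolution_def using g' by (simp add: Cmp_assoc)
  also have "\<dots> = g" using g' by (simp add: K.mult_unit_right H.comult_counit_right)
  finally show ?thesis .
qed

lemma convolution_unit_left:
  assumes g: "hom C g (hob H) (hob K)"
  shows "conv conv_unit g = g"
proof -
  have g': "g \<in> Ar C" "Dom C g = hob H" "Cod C g = hob K" using g by (auto simp: hom_def)
  have "TnM C conv_unit g = Cmp C (TnM C (hu K) (Idm C (hob K))) (TnM C (he H) g)"
    using g' by (simp add: interchange)
  moreover have "TnM C (he H) g = Cmp C g (TnM C (he H) (Idm C (hob H)))"
    using interchange[of "he H" "Idm C (Unt C)" "Idm C (hob H)" g] g' by simp
  ultimately have "conv conv_unit g
      = Cmp C (Cmp C (hm K) (TnM C (hu K) (Idm C (hob K))))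
          (Cmp C g (Cmp C (TnM C (he H) (Idm C (hob H))) (hD H)))"
    unfolding convolution_def using g' by (simp add: Cmp_assoc)
  also have "\<dots> = g" using g' by (simp add: K.mult_unit_left H.comult_counit_left)
  finally show ?thesis .
qed

lemma convolution_assoc:
  assumes "hom C g (hob H) (hob K)" "hom C h (hob H) (hob K)" "hom C k (hob H) (hob K)"
  shows "conv (conv g h) k = conv g (conv h k)"
proof -
  let ?X = "hob H" and ?Y = "hob K"
  have [simp]: "g \<in> Ar C" "Dom C g = ?X" "Cod C g = ?Y" "h \<in> Ar C" "Dom C h = ?X" "Cod C h = ?Y"
    "k \<in> Ar C" "Dom C k = ?X" "Cod C k = ?Y"
    using assms by (auto simp: hom_def)
  have left: "TnM C (conv g h) k
      = Cmp C (TnM C (hm K) (Idm C ?Y)) (Cmp C (TnM C (TnM C g h) k) (TnM C (hD H) (Idm C ?X)))"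
    and right: "TnM C g (conv h k)
      = Cmp C (TnM C (Idm C ?Y) (hm K)) (Cmp C (TnM C g (TnM C h k)) (TnM C (Idm C ?X) (hD H)))"
    unfolding convolution_def by (simp_all add: interchange)
  have "conv (conv g h) k
      = Cmp C (Cmp C (hm K) (TnM C (hm K) (Idm C ?Y)))
          (Cmp C (TnM C (TnM C g h) k) (Cmp C (TnM C (hD H) (Idm C ?X)) (hD H)))"
    unfolding convolution_def[of C H K "conv g h" k] left by (simp add: Cmp_assoc convolution_def)
  also have "\<dots> = Cmp C (Cmp C (hm K) (TnM C (Idm C ?Y) (hm K)))
          (Cmp C (TnM C g (TnM C h k)) (Cmp C (TnM C (Idm C ?X) (hD H)) (hD H)))"
    by (simp add: K.mult_assoc H.comult_coassoc TnM_assoc)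
  also have "\<dots> = conv g (conv h k)"
    unfolding convolution_def[of C H K g "conv h k"] right by (simp add: Cmp_assoc convolution_def)
  finally show ?thesis .
qed

end

locale int_hopf_hom = int_hopf_pair +
  fixes f
  assumes morphism: "is_int_hopf_morphism C H K f"
begin

lemma hom_arr[simp]: "f \<in> Ar C" "Dom C f = hob H" "Cod C f = hob K"
  using morphism unfolding is_int_hopf_morphism_def hom_def by auto

lemma hom_mult: "Cmp C f (hm H) = Cmp C (hm K) (TnM C f f)"
  and hom_unit: "Cmp C f (hu H) = hu K"
  and hom_comult: "Cmp C (hD K) f = Cmp C (TnM C f f) (hD H)"
  and hom_counit: "Cmp C (he K) f = he H"
  and hom_integral: "Cmp C f (hL H) = hL K"
  using morphism unfolding is_int_hopf_morphism_def by auto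

lemma convolution_antipode_right: "conv f (Cmp C f (hS H)) = conv_unit"
proof -
  have "TnM C f (Cmp C f (hS H)) = Cmp C (TnM C f f) (TnM C (Idm C (hob H)) (hS H))"
    by (simp add: interchange)
  then have "conv f (Cmp C f (hS H))
      = Cmp C (Cmp C (hm K) (TnM C f f)) (Cmp C (TnM C (Idm C (hob H)) (hS H)) (hD H))"
    unfolding convolution_def by (simp add: Cmp_assoc)
  also have "\<dots> = Cmp C f (Cmp C (Cmp C (hm H) (TnM C (Idm C (hob H)) (hS H))) (hD H))"
    unfolding hom_mult[symmetric] by (simp add: Cmp_assoc)
  also have "\<dots> = conv_unit"
    unfolding H.antipode_right hom_unit[symmetric] by (simp add: Cmp_assoc)
  finally show ?thesis .
qed

lemma convolution_antipode_left: "conv (Cmp C (hS K) f) f = conv_unit"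
proof -
  have "TnM C (Cmp C (hS K) f) f = Cmp C (TnM C (hS K) (Idm C (hob K))) (TnM C f f)"
    by (simp add: interchange)
  then have "conv (Cmp C (hS K) f) f
      = Cmp C (Cmp C (hm K) (TnM C (hS K) (Idm C (hob K)))) (Cmp C (TnM C f f) (hD H))"
    unfolding convolution_def by (simp add: Cmp_assoc)
  also have "\<dots> = Cmp C (Cmp C (Cmp C (hm K) (TnM C (hS K) (Idm C (hob K)))) (hD K)) f"
    unfolding hom_comult[symmetric] by (simp add: Cmp_assoc)
  also have "\<dots> = conv_unit"
    unfolding K.antipode_left hom_counit[symmetric] by (simp add: Cmp_assoc)
  finally show ?thesis .
qed

text \<open>Both sides are convolution inverses of \<open>f\<close>.\<close>

lemma hom_antipode: "Cmp C (hS K) f = Cmp C f (hS H)"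
proof -
  have homs: "hom C f (hob H) (hob K)" "hom C (Cmp C f (hS H)) (hob H) (hob K)"
    "hom C (Cmp C (hS K) f) (hob H) (hob K)"
    by (simp_all add: hom_def)
  have "Cmp C (hS K) f = conv (Cmp C (hS K) f) (conv f (Cmp C f (hS H)))"
    using convolution_unit_right homs convolution_antipode_right by simp
  also have "\<dots> = conv (conv (Cmp C (hS K) f) f) (Cmp C f (hS H))"
    using convolution_assoc homs by simp
  also have "\<dots> = Cmp C f (hS H)"
    using convolution_unit_left homs convolution_antipode_left by simp
  finally show ?thesis .
qed

lemma hom_frob_comult: "Cmp C (frob_comult C K) f = Cmp C (TnM C f f) (frob_comult C H)"
proof -
  let ?X = "hob H" and ?Y = "hob K"
  have "Cmp C (TnM C (Idm C ?Y) (Cmp C (hD K) (hL K))) f = TnM C f (Cmp C (hD K) (hL K))"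
    using interchange[of f "Idm C ?Y" "Idm C (Unt C)" "Cmp C (hD K) (hL K)"] by simp
  also have "\<dots> = TnM C f (Cmp C (TnM C f f) (Cmp C (hD H) (hL H)))"
    unfolding hom_integral[symmetric] by (simp add: Cmp_assoc[symmetric] hom_comult)
  also have "\<dots> = Cmp C (TnM C (TnM C f f) f) (TnM C (Idm C ?X) (Cmp C (hD H) (hL H)))"
    by (simp add: interchange TnM_assoc)
  finally have integral_part: "Cmp C (TnM C (Idm C ?Y) (Cmp C (hD K) (hL K))) f
      = Cmp C (TnM C (TnM C f f) f) (TnM C (Idm C ?X) (Cmp C (hD H) (hL H)))" .
  have mult_part:
    "Cmp C (TnM C (hm K) (hS K)) (TnM C (TnM C f f) f) = Cmp C (TnM C f f) (TnM C (hm H) (hS H))"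
    by (simp add: interchange hom_mult[symmetric] hom_antipode)
  have "Cmp C (frob_comult C K) f
      = Cmp C (TnM C (hm K) (hS K)) (Cmp C (TnM C (Idm C ?Y) (Cmp C (hD K) (hL K))) f)"
    unfolding frob_comult_def by (simp add: Cmp_assoc)
  also have "\<dots> = Cmp C (TnM C f f) (frob_comult C H)"
    unfolding integral_part frob_comult_def by (simp add: Cmp_assoc[symmetric] mult_part)
  finally show ?thesis .
qed

lemma frobenius_morphism:
  "is_frobenius_morphism C (hob H) (hm H) (hu H) (frob_comult C H) (hl H)
     (hob K) (hm K) (hu K) (frob_comult C K) (hl K) f"
  using morphism hom_frob_comult
  unfolding is_frobenius_morphism_def is_int_hopf_morphism_def by simp

end

theorem mainTheorem15:
  fixes C :: "('o,'m) smc"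
  assumes "strict_symmetric_monoidal_cat C"
  shows "(\<forall>H. is_int_hopf C H \<longrightarrow>
            is_frobenius_algebra C (hob H) (hm H) (hu H) (frob_comult C H) (hl H)) \<and>
         (\<forall>H K f. is_int_hopf C H \<longrightarrow> is_int_hopf C K \<longrightarrow> is_int_hopf_morphism C H K f \<longrightarrow>
            is_frobenius_morphism C
              (hob H) (hm H) (hu H) (frob_comult C H) (hl H)
              (hob K) (hm K) (hu K) (frob_comult C K) (hl K) f)"
proof (intro conjI allI impI)
  fix H assume "is_int_hopf C H"
  then interpret int_hopf_alg C H by unfold_locales (use assms in auto)
  show "is_frobenius_algebra C (hob H) (hm H) (hu H) (frob_comult C H) (hl H)"
    by (rule frobenius_algebra)
next
  fix H K f assume "is_int_hopf C H" "is_int_hopf C K" "is_int_hopf_morphism C H K f"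
  then interpret int_hopf_hom C H K f by unfold_locales (use assms in auto)
  show "is_frobenius_morphism C (hob H) (hm H) (hu H) (frob_comult C H) (hl H)
          (hob K) (hm K) (hu K) (frob_comult C K) (hl K) f"
    by (rule frobenius_morphism)
qed

end
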